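(* Let $K$ be an algebraically closed field of characteristic $0$, $m\le n$, and $0\le v\le t$. Then the assignments $$\theta:[I\,|\,J]_X\mapsto\begin{cases}[I^-\,|\,J^-]_{X'},&\{1,\dots,v\}\subseteq I\text{ and }\{1,\dots,v\}\subseteq J,\\0,&\text{otherwise},\end{cases}\qquad \psi:[L\,|\,M]_{X'}\mapsto[L^+\,|\,M^+]_X$$ induce well-defined $K$-algebra homomorphisms $\theta:A_t(m,n)\to A_{t-v}(m-v,n-v)$ and $\psi:A_{t-v}(m-v,n-v)\to A_t(m,n)$ with $\theta\circ\psi=\mathrm{id}$; thus $A_{t-v}(m-v,n-v)$ is a retract of $A_t(m,n)$. More generally, if $t'\le t$, $m'\le m$, $n'\le n$ satisfy $m-m'\ge t-t'$ and $n-n'\ge t-t'$, then $A_{t'}(m',n')$ is a retract of $A_t(m,n)$ (there are $K$-algebra homomorphisms $\iota:A_{t'}(m',n')\to A_t(m,n)$ and $\rho:A_t(m,n)\to A_{t'}(m',n')$ with $\rho\circ\iota=\mathrm{id}$).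
   Context: For integers $s,p,q$, $A_s(p,q)$ is the $K$-subalgebra of the polynomial ring in the entries of a $p\times q$ matrix of indeterminates generated by all $s$-minors. Here $X$ is an $m\times n$ and $X'$ an $(m-v)\times(n-v)$ matrix of indeterminates; $[I\,|\,J]_X$ denotes the minor of $X$ with row index set $I$ and column index set $J$ ($|I|=|J|=t$). For $I=\{i_1<\dots<i_t\}$ containing $\{1,\dots,v\}$, $I^-=\{i_{v+1}-v,\dots,i_t-v\}$; for $L=\{l_1<\dots<l_{t-v}\}$, $L^+=\{1,\dots,v\}\cup\{l_1+v,\dots,l_{t-v}+v\}$; similarly for $J^-$, $M^+$. *)

theory Defs
  imports "HOL-Library.Poly_Mapping" "HOL-Combinatorics.Permutations"
          "HOL-Computational_Algebra.Polynomial"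
begin

text \<open>Polynomial ring K[x_ij : i,j \<ge> 1] over K, realised as finitely supported
  functions from monomials (finitely supported exponent vectors indexed by (i,j)) to K.
  The polynomial ring in the entries of a p x q matrix is the subring of polynomials
  in the variables x_ij with 1 \<le> i \<le> p, 1 \<le> j \<le> q; all algebras A_s(p,q)
  are subalgebras of this ambient ring.\<close>

type_synonym 'a mpoly = "((nat \<times> nat) \<Rightarrow>\<^sub>0 nat) \<Rightarrow>\<^sub>0 'a"

definition const_mp :: "'a::comm_ring_1 \<Rightarrow> 'a mpoly" where
  "const_mp c = Poly_Mapping.single 0 c"

definition var_mp :: "nat \<Rightarrow> nat \<Rightarrow> 'a::comm_ring_1 mpoly" where
  "var_mp i j = Poly_Mapping.single (Poly_Mapping.single (i, j) 1) 1"

definition minor :: "nat set \<Rightarrow> nat set \<Rightarrow> 'a::comm_ring_1 mpoly" where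
  "minor I J = (\<Sum>\<pi> \<in> {\<pi>. \<pi> permutes {0..<card I}}.
      of_int (sign \<pi>) * (\<Prod>k<card I. var_mp (sorted_list_of_set I ! k) (sorted_list_of_set J ! \<pi> k)))"

inductive_set subalg :: "'a::comm_ring_1 mpoly set \<Rightarrow> 'a mpoly set" for S where
  gen: "x \<in> S \<Longrightarrow> x \<in> subalg S"
| const: "const_mp c \<in> subalg S"
| add: "x \<in> subalg S \<Longrightarrow> y \<in> subalg S \<Longrightarrow> x + y \<in> subalg S"
| mult: "x \<in> subalg S \<Longrightarrow> y \<in> subalg S \<Longrightarrow> x * y \<in> subalg S"

text \<open>The set of s-minors of the p x q matrix of indeterminates (indices start at 1).\<close>
definition minors :: "nat \<Rightarrow> nat \<Rightarrow> nat \<Rightarrow> 'a::comm_ring_1 mpoly set" where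
  "minors s p q = {minor I J | I J. I \<subseteq> {1..p} \<and> J \<subseteq> {1..q} \<and> card I = s \<and> card J = s}"

definition A_alg :: "nat \<Rightarrow> nat \<Rightarrow> nat \<Rightarrow> 'a::comm_ring_1 mpoly set" where
  "A_alg s p q = subalg (minors s p q)"

definition alg_hom :: "('a::comm_ring_1 mpoly \<Rightarrow> 'a mpoly) \<Rightarrow> 'a mpoly set \<Rightarrow> 'a mpoly set \<Rightarrow> bool" where
  "alg_hom f A B \<longleftrightarrow> (\<forall>x\<in>A. f x \<in> B)
     \<and> (\<forall>x\<in>A. \<forall>y\<in>A. f (x + y) = f x + f y)
     \<and> (\<forall>x\<in>A. \<forall>y\<in>A. f (x * y) = f x * f y)
     \<and> (\<forall>c. \<forall>x\<in>A. f (const_mp c * x) = const_mp c * f x)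
     \<and> f 1 = 1"

definition shift_down :: "nat \<Rightarrow> nat set \<Rightarrow> nat set" where
  "shift_down v I = (\<lambda>i. i - v) ` {i \<in> I. v < i}"

definition shift_up :: "nat \<Rightarrow> nat set \<Rightarrow> nat set" where
  "shift_up v L = {1..v} \<union> (\<lambda>l. l + v) ` L"

definition alg_closed :: "'a::field itself \<Rightarrow> bool" where
  "alg_closed _ \<longleftrightarrow> (\<forall>p::'a poly. 0 < degree p \<longrightarrow> (\<exists>x. poly p x = 0))"

end

theory Submission
  imports Defs "Jordan_Normal_Form.Determinant"
    "HOL-Library.Product_Lexorder" (* orders the variables, making the polynomial ring a domain *)
begin

text \<open>The maps \<open>\<theta>\<close> and \<open>\<psi>\<close> are prescribed on generating minors, so they extend to algebra
  homomorphisms as soon as they respect every polynomial relation among the generators.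

  For \<open>\<theta>\<close>, grade by occurrences of row and column indices: row \<open>i\<close> occurs in every factor of a
  product of \<open>t\<close>-minors iff in each monomial of the product the degree in row \<open>i\<close> is \<open>1/t\<close> of
  the total degree. Hence the part of a relation built from minors containing \<open>{1..v}\<close> in rows
  and columns is again a relation. On those minors \<open>\<theta>\<close> is induced by the ring endomorphism
  turning the first \<open>v\<close> rows and columns into those of the identity matrix and shifting all
  other variables by \<open>v\<close>; the remaining minors go to \<open>0\<close>.

  For \<open>\<psi>\<close>, substitute for \<open>x\<^sub>a\<^sub>b\<close> the bordered minor \<open>[1..v, a+v | 1..v, b+v]\<close>: by
  Sylvester's determinant identity this maps \<open>[L|M]\<close> to \<open>\<delta>\<^sup>s\<^sup>-\<^sup>1 [L\<^sup>+|M\<^sup>+]\<close>, where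
  \<open>\<delta> = [1..v|1..v] \<noteq> 0\<close> and \<open>s = t - v\<close>. Relations among the \<open>s\<close>-minors may be taken
  homogeneous, so the power of \<open>\<delta>\<close> cancels in the domain.

  \<open>\<theta> \<circ> \<psi>\<close> fixes the generators. The general retract follows by composing with the substitution
  that kills the variables outside the \<open>m' \<times> n'\<close> corner and fixes \<open>A\<^sub>t\<^sub>'(m', n')\<close>.\<close>

section \<open>Substitution into polynomials\<close>

definition monom_eval :: "('v \<Rightarrow> 'b::comm_semiring_1) \<Rightarrow> ('v \<Rightarrow>\<^sub>0 nat) \<Rightarrow> 'b" where
  "monom_eval \<sigma> \<mu> = (\<Prod>x\<in>Poly_Mapping.keys \<mu>. \<sigma> x ^ Poly_Mapping.lookup \<mu> x)"

lemma monom_eval_eq_prod_superset: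
  assumes "finite S" "Poly_Mapping.keys \<mu> \<subseteq> S"
  shows "monom_eval \<sigma> \<mu> = (\<Prod>x\<in>S. \<sigma> x ^ Poly_Mapping.lookup \<mu> x)"
  unfolding monom_eval_def
  by (rule prod.mono_neutral_left) (use assms in \<open>auto simp: in_keys_iff\<close>)

lemma monom_eval_add: "monom_eval \<sigma> (\<mu> + \<nu>) = monom_eval \<sigma> \<mu> * monom_eval \<sigma> \<nu>"
proof -
  let ?S = "Poly_Mapping.keys \<mu> \<union> Poly_Mapping.keys \<nu>"
  have "monom_eval \<sigma> (\<mu> + \<nu>) = (\<Prod>x\<in>?S. \<sigma> x ^ Poly_Mapping.lookup (\<mu> + \<nu>) x)"
    by (rule monom_eval_eq_prod_superset) (auto dest: keys_add[THEN subsetD])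
  also have "\<dots> = (\<Prod>x\<in>?S. \<sigma> x ^ Poly_Mapping.lookup \<mu> x * \<sigma> x ^ Poly_Mapping.lookup \<nu> x)"
    by (simp add: lookup_add power_add)
  also have "\<dots> = monom_eval \<sigma> \<mu> * monom_eval \<sigma> \<nu>"
    by (simp add: prod.distrib monom_eval_eq_prod_superset[of ?S])
  finally show ?thesis .
qed

lemma monom_eval_0 [simp]: "monom_eval \<sigma> 0 = 1"
  by (simp add: monom_eval_def)

lemma monom_eval_single [simp]: "monom_eval \<sigma> (Poly_Mapping.single x k) = \<sigma> x ^ k"
  by (simp add: monom_eval_def)

lemma monom_eval_cong:
  "(\<And>x. x \<in> Poly_Mapping.keys \<mu> \<Longrightarrow> \<sigma> x = \<tau> x) \<Longrightarrow> monom_eval \<sigma> \<mu> = monom_eval \<tau> \<mu>"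
  by (simp add: monom_eval_def)

lemma monom_eval_eq_0:
  "x \<in> Poly_Mapping.keys \<mu> \<Longrightarrow> \<sigma> x = 0 \<Longrightarrow> monom_eval \<sigma> \<mu> = (0::'b::comm_semiring_1)"
  unfolding monom_eval_def
  by (rule prod_zero) (auto simp: in_keys_iff power_0_left intro!: bexI[of _ x])

lemma monom_eval_scale:
  "monom_eval (\<lambda>x. c * \<sigma> x) \<mu> =
     c ^ (\<Sum>x\<in>Poly_Mapping.keys \<mu>. Poly_Mapping.lookup \<mu> x) * monom_eval \<sigma> \<mu>"
  by (simp add: monom_eval_def power_mult_distrib prod.distrib power_sum)

lemma const_mp_add: "const_mp (a + b) = const_mp a + const_mp b"
  by (simp add: const_mp_def single_add)

lemma const_mp_mult: "const_mp (a * b) = const_mp a * const_mp b"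
  by (simp add: const_mp_def mult_single)

lemma const_mp_0 [simp]: "const_mp 0 = 0"
  by (simp add: const_mp_def)

lemma const_mp_1 [simp]: "const_mp 1 = 1"
  by (simp add: const_mp_def)

text \<open>Relations among generators indexed by \<open>'v\<close> are polynomials in variables of type
  \<open>'v\<close>, evaluated at the generators.\<close>

definition poly_eval :: "('v \<Rightarrow> 'a::comm_ring_1 mpoly) \<Rightarrow> (('v \<Rightarrow>\<^sub>0 nat) \<Rightarrow>\<^sub>0 'a) \<Rightarrow> 'a mpoly" where
  "poly_eval \<sigma> p =
     (\<Sum>\<mu>\<in>Poly_Mapping.keys p. const_mp (Poly_Mapping.lookup p \<mu>) * monom_eval \<sigma> \<mu>)"

definition poly_var :: "'v \<Rightarrow> ('v \<Rightarrow>\<^sub>0 nat) \<Rightarrow>\<^sub>0 'a::comm_ring_1" where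
  "poly_var z = Poly_Mapping.single (Poly_Mapping.single z 1) 1"

lemma poly_eval_eq_sum_superset:
  assumes "finite S" "Poly_Mapping.keys p \<subseteq> S"
  shows "poly_eval \<sigma> p = (\<Sum>\<mu>\<in>S. const_mp (Poly_Mapping.lookup p \<mu>) * monom_eval \<sigma> \<mu>)"
  unfolding poly_eval_def
  by (rule sum.mono_neutral_left) (use assms in \<open>auto simp: in_keys_iff\<close>)

lemma poly_eval_add: "poly_eval \<sigma> (p + q) = poly_eval \<sigma> p + poly_eval \<sigma> q"
  unfolding poly_eval_def
  by (rule setsum_keys_plus_distrib) (simp_all add: const_mp_add distrib_right)

lemma poly_eval_0 [simp]: "poly_eval \<sigma> 0 = 0"
  by (simp add: poly_eval_def)

lemma poly_eval_single [simp]: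
  "poly_eval \<sigma> (Poly_Mapping.single \<mu> c) = const_mp c * monom_eval \<sigma> \<mu>"
  by (simp add: poly_eval_def)

lemma poly_eval_sum: "poly_eval \<sigma> (sum f A) = (\<Sum>x\<in>A. poly_eval \<sigma> (f x))"
  by (induction A rule: infinite_finite_induct) (simp_all add: poly_eval_add)

lemma poly_mapping_sum_single:
  "p = (\<Sum>\<mu>\<in>Poly_Mapping.keys p. Poly_Mapping.single \<mu> (Poly_Mapping.lookup p \<mu>))"
  by (rule poly_mapping_eqI) (auto simp: lookup_sum lookup_single when_def in_keys_iff)

lemma poly_eval_mult: "poly_eval \<sigma> (p * q) = poly_eval \<sigma> p * poly_eval \<sigma> q"
proof -
  have "p * q = (\<Sum>\<mu>\<in>Poly_Mapping.keys p. \<Sum>\<nu>\<in>Poly_Mapping.keys q.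
      Poly_Mapping.single (\<mu> + \<nu>) (Poly_Mapping.lookup p \<mu> * Poly_Mapping.lookup q \<nu>))"
    by (subst poly_mapping_sum_single[of p], subst poly_mapping_sum_single[of q])
      (simp add: sum_distrib_left sum_distrib_right mult_single
        sum.swap[where A="Poly_Mapping.keys q"])
  then have "poly_eval \<sigma> (p * q) = (\<Sum>\<mu>\<in>Poly_Mapping.keys p. \<Sum>\<nu>\<in>Poly_Mapping.keys q.
      const_mp (Poly_Mapping.lookup p \<mu>) * monom_eval \<sigma> \<mu> *
      (const_mp (Poly_Mapping.lookup q \<nu>) * monom_eval \<sigma> \<nu>))"
    by (simp add: poly_eval_sum monom_eval_add const_mp_mult ac_simps)
  also have "\<dots> = poly_eval \<sigma> p * poly_eval \<sigma> q"
    by (simp add: poly_eval_def sum_distrib_left sum_distrib_right) (rule sum.swap)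
  finally show ?thesis .
qed

lemma poly_eval_1 [simp]: "poly_eval \<sigma> 1 = 1"
  using poly_eval_single[of \<sigma> 0 1] by (simp del: poly_eval_single)

lemma poly_eval_const_mp [simp]: "poly_eval \<sigma> (const_mp c) = const_mp c"
  by (simp add: const_mp_def)

lemma poly_eval_poly_var [simp]: "poly_eval \<sigma> (poly_var z) = \<sigma> z"
  by (simp add: poly_var_def)

interpretation poly_eval: comm_ring_hom "poly_eval \<sigma>"
  by unfold_locales (simp_all add: poly_eval_add poly_eval_mult)

lemma poly_eval_monom_eval:
  "poly_eval \<tau> (monom_eval \<sigma> \<mu>) = monom_eval (\<lambda>x. poly_eval \<tau> (\<sigma> x)) \<mu>"
  by (simp add: monom_eval_def poly_eval.hom_prod poly_eval.hom_power)

lemma poly_eval_poly_eval: "poly_eval \<tau> (poly_eval \<sigma> p) = poly_eval (\<lambda>x. poly_eval \<tau> (\<sigma> x)) p"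
  unfolding poly_eval_def[of \<sigma> p] poly_eval_def[of "\<lambda>x. poly_eval \<tau> (\<sigma> x)" p]
  by (simp add: poly_eval_sum poly_eval_mult poly_eval_monom_eval)

lemma poly_eval_cong:
  "(\<And>\<mu> x. \<mu> \<in> Poly_Mapping.keys p \<Longrightarrow> x \<in> Poly_Mapping.keys \<mu> \<Longrightarrow> \<sigma> x = \<tau> x) \<Longrightarrow>
     poly_eval \<sigma> p = poly_eval \<tau> p"
  unfolding poly_eval_def
  by (intro sum.cong refl arg_cong[where f="\<lambda>x. _ * x"] monom_eval_cong) auto

lemma subalg_zero [simp]: "0 \<in> subalg S"
  using subalg.const[of 0 S] by simp

lemma subalg_one [simp]: "1 \<in> subalg S"
  using subalg.const[of 1 S] by simp

lemma subalg_sum: "(\<And>x. x \<in> A \<Longrightarrow> f x \<in> subalg S) \<Longrightarrow> sum f A \<in> subalg S"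
  by (induction A rule: infinite_finite_induct) (auto intro: subalg.add)

lemma subalg_prod: "(\<And>x. x \<in> A \<Longrightarrow> f x \<in> subalg S) \<Longrightarrow> prod f A \<in> subalg S"
  by (induction A rule: infinite_finite_induct) (auto intro: subalg.mult)

lemma subalg_power: "x \<in> subalg S \<Longrightarrow> x ^ k \<in> subalg S"
  by (induction k) (auto intro: subalg.mult)

lemma subalg_mono: "X \<subseteq> subalg S \<Longrightarrow> subalg X \<subseteq> subalg S"
proof
  fix x assume X: "X \<subseteq> subalg S" and x: "x \<in> subalg X"
  from x show "x \<in> subalg S"
    by (induction rule: subalg.induct) (use X in \<open>auto intro: subalg.intros\<close>)
qed

lemma subalg_poly_eval:
  "(\<And>\<mu> x. \<mu> \<in> Poly_Mapping.keys p \<Longrightarrow> x \<in> Poly_Mapping.keys \<mu> \<Longrightarrow> \<sigma> x \<in> subalg S) \<Longrightarrow>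
     poly_eval \<sigma> p \<in> subalg S"
  unfolding poly_eval_def monom_eval_def
  by (intro subalg_sum subalg.mult subalg.const subalg_prod subalg_power) auto

lemma alg_hom_in: "alg_hom f A B \<Longrightarrow> x \<in> A \<Longrightarrow> f x \<in> B"
  by (simp add: alg_hom_def)

lemma alg_hom_add: "alg_hom f A B \<Longrightarrow> x \<in> A \<Longrightarrow> y \<in> A \<Longrightarrow> f (x + y) = f x + f y"
  by (simp add: alg_hom_def)

lemma alg_hom_mult: "alg_hom f A B \<Longrightarrow> x \<in> A \<Longrightarrow> y \<in> A \<Longrightarrow> f (x * y) = f x * f y"
  by (simp add: alg_hom_def)

lemma alg_hom_one: "alg_hom f A B \<Longrightarrow> f 1 = 1"
  by (simp add: alg_hom_def)

lemma alg_hom_const: "alg_hom f A B \<Longrightarrow> 1 \<in> A \<Longrightarrow> f (const_mp c) = const_mp c"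
  unfolding alg_hom_def by (metis mult.right_neutral)

lemma alg_hom_id: "A \<subseteq> B \<Longrightarrow> alg_hom id A B"
  unfolding alg_hom_def by auto

lemma alg_hom_comp: "alg_hom f A B \<Longrightarrow> alg_hom g B C \<Longrightarrow> alg_hom (g \<circ> f) A C"
  unfolding alg_hom_def by auto

lemma alg_hom_restrict: "alg_hom f A B \<Longrightarrow> A' \<subseteq> A \<Longrightarrow> alg_hom f A' B"
  unfolding alg_hom_def by blast

lemma alg_hom_enlarge: "alg_hom f A B \<Longrightarrow> B \<subseteq> B' \<Longrightarrow> alg_hom f A B'"
  unfolding alg_hom_def by blast

lemma alg_hom_left_inverse_on_generators:
  assumes \<psi>: "alg_hom \<psi> (subalg G) A" and \<theta>: "alg_hom \<theta> A C" and "1 \<in> A"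
    and gen: "\<And>g. g \<in> G \<Longrightarrow> \<theta> (\<psi> g) = g"
    and "a \<in> subalg G"
  shows "\<theta> (\<psi> a) = a"
  using \<open>a \<in> subalg G\<close>
proof (induction a rule: subalg.induct)
  case (gen x)
  then show ?case by (rule assms(4))
next
  case (const c)
  then show ?case by (simp add: alg_hom_const[OF \<psi>] alg_hom_const[OF \<theta> \<open>1 \<in> A\<close>])
next
  case (add x y)
  then show ?case by (simp add: alg_hom_add[OF \<psi>] alg_hom_add[OF \<theta>] alg_hom_in[OF \<psi>])
next
  case (mult x y)
  then show ?case by (simp add: alg_hom_mult[OF \<psi>] alg_hom_mult[OF \<theta>] alg_hom_in[OF \<psi>])
qed

lemma alg_hom_poly_eval:
  assumes "\<And>x. x \<in> S \<Longrightarrow> poly_eval \<sigma> x \<in> subalg T"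
  shows "alg_hom (poly_eval \<sigma>) (subalg S) (subalg T)"
proof -
  have "poly_eval \<sigma> x \<in> subalg T" if "x \<in> subalg S" for x
    using that by induction (auto intro: subalg.intros assms simp: poly_eval_add poly_eval_mult)
  then show ?thesis
    unfolding alg_hom_def by (simp add: poly_eval_add poly_eval_mult)
qed

lemma poly_eval_fixes_subalg:
  assumes "\<And>x. x \<in> S \<Longrightarrow> poly_eval \<sigma> x = x" and "a \<in> subalg S"
  shows "poly_eval \<sigma> a = a"
  using assms(2) by induction (simp_all add: assms(1) poly_eval_add poly_eval_mult)

definition polys_over :: "'v set \<Rightarrow> (('v \<Rightarrow>\<^sub>0 nat) \<Rightarrow>\<^sub>0 'a::comm_ring_1) set" where
  "polys_over Z = {p. \<forall>\<mu>\<in>Poly_Mapping.keys p. Poly_Mapping.keys \<mu> \<subseteq> Z}"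

lemma polys_over_add: "p \<in> polys_over Z \<Longrightarrow> q \<in> polys_over Z \<Longrightarrow> p + q \<in> polys_over Z"
  unfolding polys_over_def by (auto dest!: keys_add[THEN subsetD])

lemma polys_over_diff: "p \<in> polys_over Z \<Longrightarrow> q \<in> polys_over Z \<Longrightarrow> p - q \<in> polys_over Z"
  using polys_over_add[of p Z "- q"] by (simp add: polys_over_def keys_minus)

lemma polys_over_mult: "p \<in> polys_over Z \<Longrightarrow> q \<in> polys_over Z \<Longrightarrow> p * q \<in> polys_over Z"
  unfolding polys_over_def by (fastforce dest!: keys_mult[THEN subsetD] keys_add[THEN subsetD])

lemma polys_over_const: "Poly_Mapping.single 0 c \<in> polys_over Z"
  unfolding polys_over_def by simp

lemma polys_over_poly_var: "z \<in> Z \<Longrightarrow> poly_var z \<in> polys_over Z"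
  unfolding polys_over_def poly_var_def by simp

lemma subalg_image_eq_poly_eval:
  assumes "f \<in> subalg (vals ` Z)"
  shows "\<exists>p\<in>polys_over Z. poly_eval vals p = f"
  using assms
proof (induction f rule: subalg.induct)
  case (gen x)
  then obtain z where "z \<in> Z" "x = vals z" by auto
  then show ?case by (intro bexI[of _ "poly_var z"]) (simp_all add: polys_over_poly_var)
next
  case (const c)
  show ?case
    by (intro bexI[of _ "Poly_Mapping.single 0 c"]) (simp_all add: polys_over_const const_mp_def)
next
  case (add x y)
  then show ?case by (metis poly_eval_add polys_over_add)
next
  case (mult x y)
  then show ?case by (metis poly_eval_mult polys_over_mult)
qed

definition respects_relations ::
    "('v \<Rightarrow> 'a::comm_ring_1 mpoly) \<Rightarrow> ('v \<Rightarrow> 'a mpoly) \<Rightarrow> 'v set \<Rightarrow> bool" where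
  "respects_relations vals0 vals1 Z \<longleftrightarrow>
     (\<forall>p\<in>polys_over Z. poly_eval vals0 p = 0 \<longrightarrow> poly_eval vals1 p = 0)"

definition induced_hom ::
    "('v \<Rightarrow> 'a::comm_ring_1 mpoly) \<Rightarrow> ('v \<Rightarrow> 'a mpoly) \<Rightarrow> 'v set \<Rightarrow> 'a mpoly \<Rightarrow> 'a mpoly" where
  "induced_hom vals0 vals1 Z f = poly_eval vals1 (SOME p. p \<in> polys_over Z \<and> poly_eval vals0 p = f)"

lemma induced_hom_poly_eval:
  assumes wd: "respects_relations vals0 vals1 Z" and p: "p \<in> polys_over Z"
  shows "induced_hom vals0 vals1 Z (poly_eval vals0 p) = poly_eval vals1 p"
proof -
  let ?q = "SOME q. q \<in> polys_over Z \<and> poly_eval vals0 q = poly_eval vals0 p"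
  have q: "?q \<in> polys_over Z \<and> poly_eval vals0 ?q = poly_eval vals0 p"
    by (rule someI[of _ p]) (simp add: p)
  then have "poly_eval vals0 (?q - p) = 0" by (simp add: poly_eval.hom_minus)
  moreover have "?q - p \<in> polys_over Z" using q p by (simp add: polys_over_diff)
  ultimately have "poly_eval vals1 (?q - p) = 0"
    using wd unfolding respects_relations_def by blast
  then show ?thesis unfolding induced_hom_def by (simp add: poly_eval.hom_minus)
qed

lemma induced_hom_generator:
  "respects_relations vals0 vals1 Z \<Longrightarrow> z \<in> Z \<Longrightarrow> induced_hom vals0 vals1 Z (vals0 z) = vals1 z"
  using induced_hom_poly_eval[OF _ polys_over_poly_var] by fastforce

lemma alg_hom_induced_hom:
  assumes wd: "respects_relations vals0 vals1 Z"
  shows "alg_hom (induced_hom vals0 vals1 Z) (subalg (vals0 ` Z)) (subalg (vals1 ` Z))"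
  unfolding alg_hom_def
proof (intro conjI ballI allI)
  fix x assume "x \<in> subalg (vals0 ` Z)"
  then obtain p where p: "p \<in> polys_over Z" "poly_eval vals0 p = x"
    using subalg_image_eq_poly_eval by blast
  have "poly_eval vals1 p \<in> subalg (vals1 ` Z)"
    by (rule subalg_poly_eval) (use p(1) in \<open>auto intro: subalg.gen simp: polys_over_def\<close>)
  then show "induced_hom vals0 vals1 Z x \<in> subalg (vals1 ` Z)"
    using p induced_hom_poly_eval[OF wd p(1)] by simp
  fix y assume "y \<in> subalg (vals0 ` Z)"
  then obtain q where q: "q \<in> polys_over Z" "poly_eval vals0 q = y"
    using subalg_image_eq_poly_eval by blast
  show "induced_hom vals0 vals1 Z (x + y) = induced_hom vals0 vals1 Z x + induced_hom vals0 vals1 Z y"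
    using p q induced_hom_poly_eval[OF wd] polys_over_add[OF p(1) q(1)] by (metis poly_eval_add)
  show "induced_hom vals0 vals1 Z (x * y) = induced_hom vals0 vals1 Z x * induced_hom vals0 vals1 Z y"
    using p q induced_hom_poly_eval[OF wd] polys_over_mult[OF p(1) q(1)] by (metis poly_eval_mult)
next
  fix c x assume "x \<in> subalg (vals0 ` Z)"
  then obtain p where p: "p \<in> polys_over Z" "poly_eval vals0 p = x"
    using subalg_image_eq_poly_eval by blast
  have "poly_eval \<sigma> (Poly_Mapping.single 0 c * p) = const_mp c * poly_eval \<sigma> p" for \<sigma>
    by (simp add: poly_eval_mult const_mp_def)
  then show "induced_hom vals0 vals1 Z (const_mp c * x) = const_mp c * induced_hom vals0 vals1 Z x"
    using p induced_hom_poly_eval[OF wd] polys_over_mult[OF polys_over_const p(1)] by metis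
next
  show "induced_hom vals0 vals1 Z 1 = 1"
    using induced_hom_poly_eval[OF wd polys_over_const[of 1 Z]] by simp
qed
section \<open>Gradings and homogeneous components\<close>

definition weighted_deg :: "('v \<Rightarrow> nat) \<Rightarrow> ('v \<Rightarrow>\<^sub>0 nat) \<Rightarrow> nat" where
  "weighted_deg w \<mu> = (\<Sum>x\<in>Poly_Mapping.keys \<mu>. w x * Poly_Mapping.lookup \<mu> x)"

abbreviation total_deg :: "('v \<Rightarrow>\<^sub>0 nat) \<Rightarrow> nat" where
  "total_deg \<equiv> weighted_deg (\<lambda>_. 1)"

lemma weighted_deg_0 [simp]: "weighted_deg w 0 = 0"
  by (simp add: weighted_deg_def)

lemma weighted_deg_single [simp]: "weighted_deg w (Poly_Mapping.single x k) = w x * k"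
  by (simp add: weighted_deg_def)

lemma weighted_deg_add: "weighted_deg w (\<mu> + \<nu>) = weighted_deg w \<mu> + weighted_deg w \<nu>"
proof -
  let ?S = "Poly_Mapping.keys \<mu> \<union> Poly_Mapping.keys \<nu>"
  have sup: "weighted_deg w \<kappa> = (\<Sum>x\<in>?S. w x * Poly_Mapping.lookup \<kappa> x)"
    if "Poly_Mapping.keys \<kappa> \<subseteq> ?S" for \<kappa>
    unfolding weighted_deg_def
    by (rule sum.mono_neutral_left) (use that in \<open>auto simp: in_keys_iff\<close>)
  show ?thesis
    by (subst (1 2 3) sup) (auto simp: lookup_add distrib_left sum.distrib dest: keys_add[THEN subsetD])
qed

definition weighted_homogeneous ::
    "('v \<Rightarrow> nat) \<Rightarrow> nat \<Rightarrow> (('v \<Rightarrow>\<^sub>0 nat) \<Rightarrow>\<^sub>0 'a::comm_ring_1) \<Rightarrow> bool" where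
  "weighted_homogeneous w g p \<longleftrightarrow> (\<forall>\<mu>\<in>Poly_Mapping.keys p. weighted_deg w \<mu> = g)"

lemma weighted_homogeneous_0 [simp]: "weighted_homogeneous w g 0"
  by (simp add: weighted_homogeneous_def)

lemma weighted_homogeneous_1 [simp]: "weighted_homogeneous w 0 1"
  by (simp add: weighted_homogeneous_def weighted_deg_def)

lemma weighted_homogeneousD:
  "weighted_homogeneous w g p \<Longrightarrow> \<mu> \<in> Poly_Mapping.keys p \<Longrightarrow> weighted_deg w \<mu> = g"
  by (simp add: weighted_homogeneous_def)

lemma weighted_homogeneous_mult:
  "weighted_homogeneous w a p \<Longrightarrow> weighted_homogeneous w b q \<Longrightarrow>
     weighted_homogeneous w (a + b) (p * q)"
  unfolding weighted_homogeneous_def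
  by (auto dest!: keys_mult[THEN subsetD] simp: weighted_deg_add)

lemma weighted_homogeneous_add:
  "weighted_homogeneous w a p \<Longrightarrow> weighted_homogeneous w a q \<Longrightarrow> weighted_homogeneous w a (p + q)"
  unfolding weighted_homogeneous_def by (auto dest!: keys_add[THEN subsetD])

lemma weighted_homogeneous_sum:
  "(\<And>x. x \<in> A \<Longrightarrow> weighted_homogeneous w a (f x)) \<Longrightarrow> weighted_homogeneous w a (sum f A)"
  by (induction A rule: infinite_finite_induct) (auto intro: weighted_homogeneous_add)

lemma weighted_homogeneous_const: "weighted_homogeneous w 0 (Poly_Mapping.single 0 c)"
  by (simp add: weighted_homogeneous_def)

lemma weighted_homogeneous_prod:
  "(\<And>x. x \<in> A \<Longrightarrow> weighted_homogeneous w (g x) (f x)) \<Longrightarrow>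
     weighted_homogeneous w (sum g A) (prod f A)"
  by (induction A rule: infinite_finite_induct) (auto intro: weighted_homogeneous_mult)

lemma weighted_homogeneous_power:
  "weighted_homogeneous w a p \<Longrightarrow> weighted_homogeneous w (k * a) (p ^ k)"
  by (induction k) (auto dest: weighted_homogeneous_mult)

lemma weighted_homogeneous_monom_eval:
  assumes "\<And>z. z \<in> Poly_Mapping.keys \<zeta> \<Longrightarrow> weighted_homogeneous w (g z) (vals z)"
  shows "weighted_homogeneous w (\<Sum>z\<in>Poly_Mapping.keys \<zeta>. Poly_Mapping.lookup \<zeta> z * g z)
           (monom_eval vals \<zeta>)"
  unfolding monom_eval_def by (intro weighted_homogeneous_prod weighted_homogeneous_power assms)

definition monom_filter ::
    "(('v \<Rightarrow>\<^sub>0 nat) \<Rightarrow> bool) \<Rightarrow> (('v \<Rightarrow>\<^sub>0 nat) \<Rightarrow>\<^sub>0 'a::comm_ring_1) \<Rightarrow> ('v \<Rightarrow>\<^sub>0 nat) \<Rightarrow>\<^sub>0 'a" where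
  "monom_filter P p = Poly_Mapping.mapp (\<lambda>\<mu> c. if P \<mu> then c else 0) p"

lemma lookup_monom_filter:
  "Poly_Mapping.lookup (monom_filter P p) \<mu> = (if P \<mu> then Poly_Mapping.lookup p \<mu> else 0)"
  by (auto simp: monom_filter_def lookup_mapp when_def in_keys_iff)

lemma keys_monom_filter: "Poly_Mapping.keys (monom_filter P p) = {\<mu>\<in>Poly_Mapping.keys p. P \<mu>}"
  by (auto simp: in_keys_iff lookup_monom_filter split: if_splits)

lemma monom_filter_eq_self:
  "(\<And>\<mu>. \<mu> \<in> Poly_Mapping.keys p \<Longrightarrow> P \<mu>) \<Longrightarrow> monom_filter P p = p"
  by (rule poly_mapping_eqI) (auto simp: lookup_monom_filter in_keys_iff)

lemma monom_filter_eq_0: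
  "(\<And>\<mu>. \<mu> \<in> Poly_Mapping.keys p \<Longrightarrow> \<not> P \<mu>) \<Longrightarrow> monom_filter P p = 0"
  by (rule poly_mapping_eqI) (auto simp: lookup_monom_filter in_keys_iff)

lemma monom_filter_0 [simp]: "monom_filter P 0 = 0"
  by (rule poly_mapping_eqI) (simp add: lookup_monom_filter)

lemma monom_filter_add: "monom_filter P (p + q) = monom_filter P p + monom_filter P q"
  by (rule poly_mapping_eqI) (simp add: lookup_monom_filter lookup_add)

lemma monom_filter_sum: "monom_filter P (sum f A) = (\<Sum>x\<in>A. monom_filter P (f x))"
  by (induction A rule: infinite_finite_induct)
    (simp_all add: monom_filter_add)

lemma poly_eval_monom_filter:
  "poly_eval \<sigma> (monom_filter P p) = (\<Sum>\<zeta>\<in>Poly_Mapping.keys p.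
     if P \<zeta> then const_mp (Poly_Mapping.lookup p \<zeta>) * monom_eval \<sigma> \<zeta> else 0)"
  by (subst poly_eval_eq_sum_superset[of "Poly_Mapping.keys p"])
    (auto simp: keys_monom_filter lookup_monom_filter intro!: sum.cong)

lemma keys_const_mp_mult: "Poly_Mapping.keys (const_mp c * p) \<subseteq> Poly_Mapping.keys p"
  by (auto simp: const_mp_def dest!: keys_mult[THEN subsetD] split: if_splits)

lemma monom_filter_poly_eval:
  assumes "\<And>\<zeta> \<mu>. \<zeta> \<in> Poly_Mapping.keys p \<Longrightarrow> \<mu> \<in> Poly_Mapping.keys (monom_eval vals \<zeta>) \<Longrightarrow>
    Q \<mu> \<longleftrightarrow> P \<zeta>"
  shows "monom_filter Q (poly_eval vals p) = poly_eval vals (monom_filter P p)"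
  unfolding poly_eval_def[of vals p] monom_filter_sum poly_eval_monom_filter
proof (rule sum.cong[OF refl])
  fix \<zeta> assume \<zeta>: "\<zeta> \<in> Poly_Mapping.keys p"
  have "Q \<mu> \<longleftrightarrow> P \<zeta>"
    if "\<mu> \<in> Poly_Mapping.keys (const_mp (Poly_Mapping.lookup p \<zeta>) * monom_eval vals \<zeta>)" for \<mu>
    using assms[OF \<zeta>] keys_const_mp_mult that by blast
  then show "monom_filter Q (const_mp (Poly_Mapping.lookup p \<zeta>) * monom_eval vals \<zeta>) =
      (if P \<zeta> then const_mp (Poly_Mapping.lookup p \<zeta>) * monom_eval vals \<zeta> else 0)"
    by (auto intro: monom_filter_eq_self monom_filter_eq_0)
qed

lemma poly_eval_monom_filter_vanishing:
  assumes "\<And>\<zeta>. \<zeta> \<in> Poly_Mapping.keys p \<Longrightarrow> \<not> P \<zeta> \<Longrightarrow> \<exists>z\<in>Poly_Mapping.keys \<zeta>. \<sigma> z = 0"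
  shows "poly_eval \<sigma> p = poly_eval \<sigma> (monom_filter P p)"
  unfolding poly_eval_monom_filter poly_eval_def[of \<sigma> p]
  by (rule sum.cong[OF refl]) (use assms monom_eval_eq_0 in fastforce)

lemma poly_eval_scale_homogeneous:
  assumes "\<And>\<zeta>. \<zeta> \<in> Poly_Mapping.keys p \<Longrightarrow> total_deg \<zeta> = d"
  shows "poly_eval (\<lambda>z. c * \<sigma> z) p = c ^ d * poly_eval \<sigma> p"
  unfolding poly_eval_def sum_distrib_left
  by (rule sum.cong[OF refl]) (use assms in \<open>simp add: monom_eval_scale weighted_deg_def\<close>)

lemma sum_homogeneous_components:
  "p = (\<Sum>d\<in>total_deg ` Poly_Mapping.keys p. monom_filter (\<lambda>\<zeta>. total_deg \<zeta> = d) p)"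
  by (rule poly_mapping_eqI)
    (auto simp: lookup_sum lookup_monom_filter sum.delta in_keys_iff)

lemma respects_relations_partial_subst:
  assumes good: "\<And>z. z \<in> Z \<Longrightarrow> good z \<Longrightarrow> vals1 z = poly_eval \<tau> (vals0 z)"
    and bad: "\<And>z. z \<in> Z \<Longrightarrow> \<not> good z \<Longrightarrow> vals1 z = 0"
    and detect: "\<And>\<zeta> \<mu>. Poly_Mapping.keys \<zeta> \<subseteq> Z \<Longrightarrow>
      \<mu> \<in> Poly_Mapping.keys (monom_eval vals0 \<zeta>) \<Longrightarrow> Q \<mu> \<longleftrightarrow> (\<forall>z\<in>Poly_Mapping.keys \<zeta>. good z)"
  shows "respects_relations vals0 vals1 Z"
  unfolding respects_relations_def
proof safe
  fix p assume p: "p \<in> polys_over Z" and rel: "poly_eval vals0 p = 0"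
  let ?P = "\<lambda>\<zeta>. \<forall>z\<in>Poly_Mapping.keys \<zeta>. good z"
  have keys: "Poly_Mapping.keys \<zeta> \<subseteq> Z" if "\<zeta> \<in> Poly_Mapping.keys p" for \<zeta>
    using p that by (auto simp: polys_over_def)
  have "poly_eval vals1 p = poly_eval vals1 (monom_filter ?P p)"
    by (rule poly_eval_monom_filter_vanishing) (use keys bad in blast)
  also have "\<dots> = poly_eval (\<lambda>z. poly_eval \<tau> (vals0 z)) (monom_filter ?P p)"
    by (rule poly_eval_cong) (use keys good in \<open>auto simp: keys_monom_filter\<close>)
  also have "\<dots> = poly_eval \<tau> (poly_eval vals0 (monom_filter ?P p))"
    by (simp add: poly_eval_poly_eval)
  also have "poly_eval vals0 (monom_filter ?P p) = monom_filter Q (poly_eval vals0 p)"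
    by (rule monom_filter_poly_eval[symmetric]) (use detect keys in blast)
  finally show "poly_eval vals1 p = 0"
    using rel by (simp add: monom_filter_eq_0)
qed

lemma relation_homogeneous_component:
  assumes hom: "\<And>z. z \<in> Z \<Longrightarrow> weighted_homogeneous (\<lambda>_. 1) s (vals z)" and "0 < s"
    and p: "p \<in> polys_over Z" and rel: "poly_eval vals p = 0"
  shows "poly_eval vals (monom_filter (\<lambda>\<zeta>. total_deg \<zeta> = d) p) = 0"
proof -
  have "total_deg \<mu> = s * d \<longleftrightarrow> total_deg \<zeta> = d"
    if \<zeta>: "\<zeta> \<in> Poly_Mapping.keys p" and \<mu>: "\<mu> \<in> Poly_Mapping.keys (monom_eval vals \<zeta>)" for \<zeta> \<mu>
  proof -
    have "total_deg \<mu> = (\<Sum>z\<in>Poly_Mapping.keys \<zeta>. Poly_Mapping.lookup \<zeta> z * s)"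
      by (rule weighted_homogeneousD[OF weighted_homogeneous_monom_eval \<mu>])
        (use p \<zeta> hom in \<open>auto simp: polys_over_def\<close>)
    also have "\<dots> = s * total_deg \<zeta>"
      by (simp add: weighted_deg_def sum_distrib_left mult.commute)
    finally show ?thesis using \<open>0 < s\<close> by simp
  qed
  then have "poly_eval vals (monom_filter (\<lambda>\<zeta>. total_deg \<zeta> = d) p) =
      monom_filter (\<lambda>\<mu>. total_deg \<mu> = s * d) (poly_eval vals p)"
    by (intro monom_filter_poly_eval[symmetric])
  then show ?thesis using rel by (simp add: monom_filter_eq_0)
qed

text \<open>Relations among generators homogeneous of positive degree may be taken homogeneous,
  so a nonzero factor \<open>c\<close> per generator cancels.\<close>

lemma respects_relations_scaled_subst:
  fixes vals0 vals1 :: "'v \<Rightarrow> 'a::idom mpoly"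
  assumes hom: "\<And>z. z \<in> Z \<Longrightarrow> weighted_homogeneous (\<lambda>_. 1) s (vals0 z)" and "0 < s"
    and subst: "\<And>z. z \<in> Z \<Longrightarrow> poly_eval \<tau> (vals0 z) = c * vals1 z" and "c \<noteq> 0"
  shows "respects_relations vals0 vals1 Z"
  unfolding respects_relations_def
proof safe
  fix p assume p: "p \<in> polys_over Z" and rel: "poly_eval vals0 p = 0"
  have component: "poly_eval vals1 (monom_filter (\<lambda>\<zeta>. total_deg \<zeta> = d) p) = 0" for d
  proof -
    let ?p = "monom_filter (\<lambda>\<zeta>. total_deg \<zeta> = d) p"
    have "c ^ d * poly_eval vals1 ?p = poly_eval (\<lambda>z. c * vals1 z) ?p"
      by (rule poly_eval_scale_homogeneous[symmetric]) (simp add: keys_monom_filter)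
    also have "\<dots> = poly_eval \<tau> (poly_eval vals0 ?p)"
      unfolding poly_eval_poly_eval
    proof (rule poly_eval_cong)
      fix \<mu> z assume "\<mu> \<in> Poly_Mapping.keys ?p" "z \<in> Poly_Mapping.keys \<mu>"
      then have "z \<in> Z" using p by (auto simp: keys_monom_filter polys_over_def)
      then show "c * vals1 z = poly_eval \<tau> (vals0 z)" by (simp add: subst)
    qed
    also have "\<dots> = 0"
      using relation_homogeneous_component[OF hom \<open>0 < s\<close> p rel, of d] by simp
    finally show ?thesis using \<open>c \<noteq> 0\<close> by simp
  qed
  have "poly_eval vals1 p =
      (\<Sum>d\<in>total_deg ` Poly_Mapping.keys p. poly_eval vals1 (monom_filter (\<lambda>\<zeta>. total_deg \<zeta> = d) p))"
    by (subst sum_homogeneous_components[of p]) (rule poly_eval_sum)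
  also have "\<dots> = 0"
    by (rule sum.neutral) (use component in blast)
  finally show "poly_eval vals1 p = 0" .
qed
section \<open>Minors and shifted index sets\<close>

lemma sorted_list_of_shift_up:
  assumes "finite L" "0 \<notin> L"
  shows "sorted_list_of_set (shift_up v L) = [1..<v+1] @ map (\<lambda>l. l + v) (sorted_list_of_set L)"
proof -
  let ?xs = "sorted_list_of_set L"
  let ?l = "[1..<v+1] @ map (\<lambda>l. l + v) ?xs"
  have "x < l + v" if "x \<in> set [1..<v+1]" "l \<in> set ?xs" for x l
  proof -
    have "l \<noteq> 0"
    proof
      assume "l = 0"
      with that(2) assms show False by simp
    qed
    then show ?thesis using that(1) by (simp del: upt_Suc)
  qed
  then have "sorted_wrt (<) ?l"
    by (auto simp: sorted_wrt_append sorted_wrt_map simp del: upt_Suc)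
  moreover have "set ?l = shift_up v L"
    using assms by (auto simp: shift_up_def)
  moreover have "length ?l = card (shift_up v L)"
  proof -
    have "card (shift_up v L) = card {1..v} + card ((\<lambda>l. l + v) ` L)"
      unfolding shift_up_def using assms by (intro card_Un_disjoint) auto
    also have "\<dots> = v + card L" by (simp add: card_image inj_on_def)
    finally show ?thesis by simp
  qed
  ultimately show ?thesis
    using sorted_list_of_set_unique[of "shift_up v L" ?l] assms by (simp add: shift_up_def)
qed

lemma card_shift_up: "finite L \<Longrightarrow> 0 \<notin> L \<Longrightarrow> card (shift_up v L) = v + card L"
  using sorted_list_of_shift_up[of L v] length_sorted_list_of_set[of "shift_up v L"]
  by (simp del: upt_Suc)

lemma finite_shift_down: "finite I \<Longrightarrow> finite (shift_down v I)"
  by (simp add: shift_down_def)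

lemma zero_notin_shift_down: "0 \<notin> shift_down v I"
  by (auto simp: shift_down_def)

lemma shift_up_shift_down:
  assumes "{1..v} \<subseteq> I" "0 \<notin> I"
  shows "shift_up v (shift_down v I) = I"
proof -
  have "(\<lambda>l. l + v) ` shift_down v I = {i \<in> I. v < i}"
    unfolding shift_down_def image_image by (auto intro!: image_eqI)
  moreover have "I = {1..v} \<union> {i \<in> I. v < i}"
  proof
    show "I \<subseteq> {1..v} \<union> {i \<in> I. v < i}"
    proof
      fix i assume "i \<in> I"
      with assms(2) have "0 < i" by (cases i) auto
      with \<open>i \<in> I\<close> show "i \<in> {1..v} \<union> {i \<in> I. v < i}" by auto
    qed
  qed (use assms(1) in auto)
  ultimately show ?thesis unfolding shift_up_def by simp
qed

lemma shift_down_shift_up: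
  assumes "0 \<notin> L"
  shows "shift_down v (shift_up v L) = L"
proof -
  have "{i \<in> shift_up v L. v < i} = (\<lambda>l. l + v) ` L"
    using assms unfolding shift_up_def by (auto intro: gr0I)
  then show ?thesis by (simp add: shift_down_def image_image)
qed

lemma sorted_list_of_set_shift_down:
  assumes "finite I" "{1..v} \<subseteq> I" "0 \<notin> I"
  shows "sorted_list_of_set I = [1..<v+1] @ map (\<lambda>l. l + v) (sorted_list_of_set (shift_down v I))"
  using sorted_list_of_shift_up[of "shift_down v I" v] shift_up_shift_down[OF assms(2,3)] assms(1)
  by (simp add: finite_shift_down zero_notin_shift_down)

lemma card_shift_down:
  assumes "finite I" "{1..v} \<subseteq> I" "0 \<notin> I"
  shows "card (shift_down v I) + v = card I"
  using card_shift_up[of "shift_down v I" v] shift_up_shift_down[OF assms(2,3)] assms(1)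
  by (simp add: finite_shift_down zero_notin_shift_down)

lemma nth_upt_append_map_shift:
  assumes "k < v + length ys"
  shows "([1..<v+1] @ map (\<lambda>l. l + v) ys) ! k = (if k < v then k + 1 else ys ! (k - v) + v)"
  using assms by (auto simp: nth_append simp del: upt_Suc)

lemma sorted_nth_in:
  assumes "finite I" "k < card I"
  shows "sorted_list_of_set I ! k \<in> I"
  using assms by (metis length_sorted_list_of_set nth_mem set_sorted_list_of_set)

lemma shift_down_subset:
  assumes "K \<subseteq> {1..p}"
  shows "shift_down v K \<subseteq> {1..p - v}"
proof
  fix x assume "x \<in> shift_down v K"
  then obtain i where "i \<in> K" "v < i" "x = i - v" by (auto simp: shift_down_def)
  with assms show "x \<in> {1..p - v}" by auto
qed

lemma shift_up_subset: "K \<subseteq> {1..p - v} \<Longrightarrow> K \<noteq> {} \<Longrightarrow> shift_up v K \<subseteq> {1..p}"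
  by (fastforce simp: shift_up_def)

definition minor_indices :: "nat \<Rightarrow> nat \<Rightarrow> nat \<Rightarrow> (nat set \<times> nat set) set" where
  "minor_indices t p q = {(I, J). I \<subseteq> {1..p} \<and> J \<subseteq> {1..q} \<and> card I = t \<and> card J = t}"

definition minor_of :: "nat set \<times> nat set \<Rightarrow> 'a::comm_ring_1 mpoly" where
  "minor_of = (\<lambda>(I, J). minor I J)"

lemma A_alg_eq_subalg_minor_of: "A_alg t p q = subalg (minor_of ` minor_indices t p q)"
proof -
  have "(minors t p q :: 'a::comm_ring_1 mpoly set) = minor_of ` minor_indices t p q"
    unfolding minors_def minor_of_def minor_indices_def by (auto simp: image_iff)
  then show ?thesis by (simp add: A_alg_def)
qed

lemma minor_indicesD:
  assumes "(I, J) \<in> minor_indices t p q"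
  shows "finite I" "finite J" "0 \<notin> I" "0 \<notin> J" "card I = t" "card J = t"
    "I \<subseteq> {1..p}" "J \<subseteq> {1..q}"
  using assms unfolding minor_indices_def by (auto intro: finite_subset)

lemma minor_in_A_alg: "(I, J) \<in> minor_indices t p q \<Longrightarrow> minor I J \<in> A_alg t p q"
  unfolding A_alg_eq_subalg_minor_of by (rule subalg.gen) (force simp: minor_of_def)

lemma minor_empty: "minor {} {} = 1"
  by (simp add: minor_def)

lemma A_alg_0_subset: "A_alg 0 p q \<subseteq> subalg {1 :: 'a::comm_ring_1 mpoly}"
proof -
  have "minors 0 p q \<subseteq> {1 :: 'a::comm_ring_1 mpoly}"
  proof
    fix x :: "'a mpoly" assume "x \<in> minors 0 p q"
    then obtain I J where "x = minor I J" "I \<subseteq> {1..p}" "J \<subseteq> {1..q}" "card I = 0" "card J = 0"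
      unfolding minors_def by blast
    then have "I = {}" "J = {}" by (auto dest: finite_subset[OF _ finite_atLeastAtMost])
    then show "x \<in> {1}" using \<open>x = minor I J\<close> by (simp add: minor_empty)
  qed
  then show ?thesis
    unfolding A_alg_def by (intro subalg_mono) (auto intro: subalg.gen)
qed

lemma A_alg_mono:
  assumes "m' \<le> p" "n' \<le> q"
  shows "A_alg t m' n' \<subseteq> A_alg t p q"
  unfolding A_alg_def
  by (rule subalg_mono) (use assms in \<open>fastforce simp: minors_def intro: subalg.gen\<close>)

definition minor_mat :: "nat \<Rightarrow> (nat \<Rightarrow> nat) \<Rightarrow> (nat \<Rightarrow> nat) \<Rightarrow> 'a::comm_ring_1 mpoly mat" where
  "minor_mat n r c = mat n n (\<lambda>(k, l). var_mp (r k) (c l))"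

lemma minor_eq_det:
  "minor I J = det (minor_mat (card I) (\<lambda>k. sorted_list_of_set I ! k) (\<lambda>l. sorted_list_of_set J ! l))"
  unfolding minor_def det_def minor_mat_def
  by (auto simp: lessThan_atLeast0 permutes_in_image intro!: sum.cong prod.cong)

lemma poly_eval_minor:
  "poly_eval \<tau> (minor I J) =
     det (mat (card I) (card I) (\<lambda>(k, l). \<tau> (sorted_list_of_set I ! k, sorted_list_of_set J ! l)))"
  unfolding minor_eq_det poly_eval.hom_det[symmetric]
  by (rule arg_cong[where f=det]) (auto simp: minor_mat_def var_mp_def intro!: eq_matI)

lemma weighted_homogeneous_minor:
  assumes "\<And>\<pi>. \<pi> permutes {0..<card I} \<Longrightarrow>
     (\<Sum>k<card I. w (sorted_list_of_set I ! k, sorted_list_of_set J ! \<pi> k)) = g"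
  shows "weighted_homogeneous w g (minor I J)"
  unfolding minor_def
proof (rule weighted_homogeneous_sum)
  fix \<pi> assume "\<pi> \<in> {\<pi>. \<pi> permutes {0..<card I}}"
  then have g: "(\<Sum>k<card I. w (sorted_list_of_set I ! k, sorted_list_of_set J ! \<pi> k)) = g"
    using assms by simp
  have "weighted_homogeneous w (0 + (\<Sum>k<card I. w (sorted_list_of_set I ! k, sorted_list_of_set J ! \<pi> k)))
     (of_int (sign \<pi>) * (\<Prod>k<card I. var_mp (sorted_list_of_set I ! k) (sorted_list_of_set J ! \<pi> k)))"
    using weighted_homogeneous_const[of w "of_int (sign \<pi>)"]
    by (intro weighted_homogeneous_mult weighted_homogeneous_prod)
      (auto simp: weighted_homogeneous_def var_mp_def)
  then show "weighted_homogeneous w g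
      (of_int (sign \<pi>) * (\<Prod>k<card I. var_mp (sorted_list_of_set I ! k) (sorted_list_of_set J ! \<pi> k)))"
    using g by simp
qed
abbreviation row_weight :: "nat \<Rightarrow> nat \<times> nat \<Rightarrow> nat" where
  "row_weight i \<equiv> \<lambda>(a, b). if a = i then 1 else 0"

abbreviation col_weight :: "nat \<Rightarrow> nat \<times> nat \<Rightarrow> nat" where
  "col_weight j \<equiv> \<lambda>(a, b). if b = j then 1 else 0"

lemma sum_indicator_nth_distinct:
  assumes "distinct xs"
  shows "(\<Sum>k<length xs. if xs ! k = i then 1 else 0) = (if i \<in> set xs then 1 else (0::nat))"
proof (cases "i \<in> set xs")
  case True
  then obtain k0 where k0: "k0 < length xs" "xs ! k0 = i" by (auto simp: in_set_conv_nth)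
  have "(\<Sum>k<length xs. if xs ! k = i then 1 else 0) = (\<Sum>k\<in>{k0}. if xs ! k = i then 1 else (0::nat))"
    by (rule sum.mono_neutral_right) (use k0 assms in \<open>auto simp: nth_eq_iff_index_eq\<close>)
  then show ?thesis using True k0 by simp
qed (auto simp: in_set_conv_nth)

lemma weighted_homogeneous_minor_row:
  "finite I \<Longrightarrow> weighted_homogeneous (row_weight i) (if i \<in> I then 1 else 0) (minor I J)"
  by (rule weighted_homogeneous_minor)
    (use sum_indicator_nth_distinct[of "sorted_list_of_set I" i] in auto)

lemma weighted_homogeneous_minor_col:
  assumes "finite J" "card J = card I"
  shows "weighted_homogeneous (col_weight j) (if j \<in> J then 1 else 0) (minor I J)"
proof (rule weighted_homogeneous_minor)
  fix \<pi> assume \<pi>: "\<pi> permutes {0..<card I}"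
  let ?ind = "\<lambda>k. if sorted_list_of_set J ! k = j then 1 else (0::nat)"
  have "(\<Sum>k<card I. col_weight j (sorted_list_of_set I ! k, sorted_list_of_set J ! \<pi> k)) =
      (\<Sum>k\<in>{0..<card I}. (?ind \<circ> \<pi>) k)"
    by (simp add: lessThan_atLeast0)
  also have "\<dots> = (\<Sum>k<card J. ?ind k)"
    using sum.permute[OF \<pi>, of ?ind] assms(2) by (simp add: lessThan_atLeast0)
  also have "\<dots> = (if j \<in> J then 1 else 0)"
    using sum_indicator_nth_distinct[of "sorted_list_of_set J" j] assms(1) by simp
  finally show "(\<Sum>k<card I. col_weight j (sorted_list_of_set I ! k, sorted_list_of_set J ! \<pi> k)) =
      (if j \<in> J then 1 else 0)" .
qed

lemma weighted_homogeneous_minor_total: "weighted_homogeneous (\<lambda>_. 1) (card I) (minor I J)"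
  by (rule weighted_homogeneous_minor) simp

lemma sum_weighted_indicator_eq_sum_iff:
  assumes "finite A" "\<And>z. z \<in> A \<Longrightarrow> 0 < f z"
  shows "(\<Sum>z\<in>A. f z * (if P z then 1 else 0)) = (\<Sum>z\<in>A. (f z :: nat)) \<longleftrightarrow> (\<forall>z\<in>A. P z)"
proof
  assume eq: "(\<Sum>z\<in>A. f z * (if P z then 1 else 0)) = (\<Sum>z\<in>A. f z)"
  show "\<forall>z\<in>A. P z"
  proof (rule ccontr)
    assume "\<not> (\<forall>z\<in>A. P z)"
    then obtain z0 where "z0 \<in> A" "\<not> P z0" by blast
    then have "(\<Sum>z\<in>A. f z * (if P z then 1 else 0)) < (\<Sum>z\<in>A. f z)"
      using assms by (intro sum_strict_mono_ex1) (auto intro!: bexI[of _ z0])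
    with eq show False by simp
  qed
qed simp

lemma monomial_of_minors_row_col_criterion:
  assumes keys: "Poly_Mapping.keys \<zeta> \<subseteq> minor_indices t p q"
    and \<mu>: "\<mu> \<in> Poly_Mapping.keys (monom_eval (minor_of :: _ \<Rightarrow> 'a::comm_ring_1 mpoly) \<zeta>)"
    and "0 < t"
  shows "t * weighted_deg (row_weight i) \<mu> = total_deg \<mu> \<longleftrightarrow> (\<forall>z\<in>Poly_Mapping.keys \<zeta>. i \<in> fst z)"
    and "t * weighted_deg (col_weight j) \<mu> = total_deg \<mu> \<longleftrightarrow> (\<forall>z\<in>Poly_Mapping.keys \<zeta>. j \<in> snd z)"
proof -
  have idx: "finite I" "finite J" "card I = t" "card J = t"
    if "(I, J) \<in> Poly_Mapping.keys \<zeta>" for I J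
    using minor_indicesD[of I J t p q] keys that by auto
  have pos: "\<And>z. z \<in> Poly_Mapping.keys \<zeta> \<Longrightarrow> 0 < Poly_Mapping.lookup \<zeta> z"
    by (simp add: in_keys_iff)
  have deg: "weighted_deg w \<mu> = (\<Sum>z\<in>Poly_Mapping.keys \<zeta>. Poly_Mapping.lookup \<zeta> z * g z)"
    if "\<And>I J. (I, J) \<in> Poly_Mapping.keys \<zeta> \<Longrightarrow> weighted_homogeneous w (g (I, J)) (minor I J :: 'a mpoly)"
    for w g
    by (rule weighted_homogeneousD[OF weighted_homogeneous_monom_eval \<mu>])
      (use that in \<open>auto simp: minor_of_def\<close>)
  have "total_deg \<mu> = (\<Sum>z\<in>Poly_Mapping.keys \<zeta>. Poly_Mapping.lookup \<zeta> z * t)"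
    by (rule deg) (metis idx(3) weighted_homogeneous_minor_total)
  then have "total_deg \<mu> = t * (\<Sum>z\<in>Poly_Mapping.keys \<zeta>. Poly_Mapping.lookup \<zeta> z)"
    by (simp add: sum_distrib_left mult.commute)
  moreover have "weighted_deg (row_weight i) \<mu> =
      (\<Sum>z\<in>Poly_Mapping.keys \<zeta>. Poly_Mapping.lookup \<zeta> z * (if i \<in> fst z then 1 else 0))"
    by (rule deg) (simp add: weighted_homogeneous_minor_row idx)
  moreover have "weighted_deg (col_weight j) \<mu> =
      (\<Sum>z\<in>Poly_Mapping.keys \<zeta>. Poly_Mapping.lookup \<zeta> z * (if j \<in> snd z then 1 else 0))"
    by (rule deg) (simp add: weighted_homogeneous_minor_col idx)
  ultimately show "t * weighted_deg (row_weight i) \<mu> = total_deg \<mu> \<longleftrightarrow> (\<forall>z\<in>Poly_Mapping.keys \<zeta>. i \<in> fst z)"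
    and "t * weighted_deg (col_weight j) \<mu> = total_deg \<mu> \<longleftrightarrow> (\<forall>z\<in>Poly_Mapping.keys \<zeta>. j \<in> snd z)"
    using \<open>0 < t\<close> pos sum_weighted_indicator_eq_sum_iff[of "Poly_Mapping.keys \<zeta>" "Poly_Mapping.lookup \<zeta>"]
    by simp_all
qed
section \<open>Sylvester's determinant identity\<close>

lemma schur_elimination:
  fixes A :: "'a::comm_ring_1 mat"
  assumes A: "A \<in> carrier_mat v v" and B: "B \<in> carrier_mat v s"
    and C: "C \<in> carrier_mat s v" and E: "E \<in> carrier_mat s s"
  shows "four_block_mat (1\<^sub>m v) (0\<^sub>m v s) (- (C * adj_mat A)) (det A \<cdot>\<^sub>m 1\<^sub>m s) * four_block_mat A B C E
       = four_block_mat A B (0\<^sub>m s v) (det A \<cdot>\<^sub>m E - C * adj_mat A * B)"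
proof -
  let ?D = "det A"
  have adj: "adj_mat A \<in> carrier_mat v v" "adj_mat A * A = ?D \<cdot>\<^sub>m 1\<^sub>m v"
    using adj_mat[OF A] by auto
  have CA: "C * adj_mat A \<in> carrier_mat s v" using C adj by auto
  have "C * adj_mat A * A = C * (adj_mat A * A)"
    using C adj A by (simp add: assoc_mult_mat[of C s v _ v A v])
  also have "\<dots> = ?D \<cdot>\<^sub>m C"
    using C adj(2) by (simp add: mult_smult_distrib[of C s v "1\<^sub>m v" v])
  moreover have "- (C * adj_mat A) * A = - (C * adj_mat A * A)"
    by (rule uminus_mult_left_mat) (use CA A in auto)
  ultimately have "- (C * adj_mat A) * A = - (?D \<cdot>\<^sub>m C)"
    by simp
  moreover have "?D \<cdot>\<^sub>m 1\<^sub>m s * C = ?D \<cdot>\<^sub>m C"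
    using C by (simp add: mult_smult_assoc_mat[of "1\<^sub>m s" s s C v])
  ultimately have lower_left: "- (C * adj_mat A) * A + ?D \<cdot>\<^sub>m 1\<^sub>m s * C = 0\<^sub>m s v"
    using C by simp
  have "?D \<cdot>\<^sub>m 1\<^sub>m s * E = ?D \<cdot>\<^sub>m E"
    using E by (simp add: mult_smult_assoc_mat[of "1\<^sub>m s" s s E s])
  moreover have "- (C * adj_mat A) * B = - (C * adj_mat A * B)"
    by (rule uminus_mult_left_mat) (use CA B in auto)
  moreover have "C * adj_mat A * B \<in> carrier_mat s s" using CA B by auto
  ultimately have lower_right:
      "- (C * adj_mat A) * B + ?D \<cdot>\<^sub>m 1\<^sub>m s * E = ?D \<cdot>\<^sub>m E - C * adj_mat A * B"
    using E by (simp add: minus_add_uminus_mat[of "?D \<cdot>\<^sub>m E" s s "C * adj_mat A * B"]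
        comm_add_mat[of _ s s])
  have c: "1\<^sub>m v \<in> carrier_mat v v" "0\<^sub>m v s \<in> carrier_mat v s"
    "- (C * adj_mat A) \<in> carrier_mat s v" "?D \<cdot>\<^sub>m 1\<^sub>m s \<in> carrier_mat s s"
    using CA by auto
  show ?thesis
    unfolding mult_four_block_mat[OF c A B C E] lower_left lower_right
    using A B by (simp add: left_mult_zero_mat[OF C] left_mult_zero_mat[OF E])
qed

lemma det_four_block_mat_schur:
  fixes A :: "'a::idom mat"
  assumes A: "A \<in> carrier_mat v v" and B: "B \<in> carrier_mat v s"
    and C: "C \<in> carrier_mat s v" and E: "E \<in> carrier_mat s s"
  shows "det A ^ s * det (four_block_mat A B C E) = det A * det (det A \<cdot>\<^sub>m E - C * adj_mat A * B)"
proof -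
  let ?P = "four_block_mat (1\<^sub>m v) (0\<^sub>m v s) (- (C * adj_mat A)) (det A \<cdot>\<^sub>m 1\<^sub>m s)"
  have CA: "C * adj_mat A \<in> carrier_mat s v" using C adj_mat[OF A] by auto
  have "det ?P = det A ^ s"
    by (subst det_four_block_mat_upper_right_zero[of _ v _ s]) (use CA in auto)
  then have "det A ^ s * det (four_block_mat A B C E) = det (?P * four_block_mat A B C E)"
    using det_mult[of ?P "v + s" "four_block_mat A B C E"] A E by auto
  also have "\<dots> = det A * det (det A \<cdot>\<^sub>m E - C * adj_mat A * B)"
    unfolding schur_elimination[OF assms]
    by (rule det_four_block_mat_lower_left_zero[OF A B refl])
      (use CA B E in \<open>auto intro!: minus_carrier_mat\<close>)
  finally show ?thesis .
qed

lemma det_bordered_eq_schur_entry: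
  fixes N :: "'a::idom mat" and v s a b :: nat
  defines "A \<equiv> mat v v (\<lambda>(i, j). N $$ (i, j))" and "B \<equiv> mat v s (\<lambda>(i, j). N $$ (i, v + j))"
    and "C \<equiv> mat s v (\<lambda>(i, j). N $$ (v + i, j))" and "E \<equiv> mat s s (\<lambda>(i, j). N $$ (v + i, v + j))"
  assumes "det A \<noteq> 0" and ab: "a < s" "b < s"
  shows "det (mat (Suc v) (Suc v) (\<lambda>(i, j). N $$ (if i < v then i else v + a, if j < v then j else v + b)))
       = (det A \<cdot>\<^sub>m E - C * adj_mat A * B) $$ (a, b)"
proof -
  let ?D = "det A"
  let ?bc = "mat v 1 (\<lambda>(i, _). B $$ (i, b))"
  let ?cr = "mat 1 v (\<lambda>(_, j). C $$ (a, j))"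
  let ?e = "mat 1 1 (\<lambda>_. E $$ (a, b))"
  have cars: "A \<in> carrier_mat v v" "B \<in> carrier_mat v s" "C \<in> carrier_mat s v" "E \<in> carrier_mat s s"
    and adj: "adj_mat A \<in> carrier_mat v v"
    using adj_mat[of A v] by (simp_all add: A_def B_def C_def E_def)
  have M: "mat (Suc v) (Suc v) (\<lambda>(i, j). N $$ (if i < v then i else v + a, if j < v then j else v + b))
      = four_block_mat A ?bc ?cr ?e"
    by (rule eq_matI) (use ab in \<open>auto simp: A_def B_def C_def E_def\<close>)
  have "det (?D \<cdot>\<^sub>m ?e - ?cr * adj_mat A * ?bc) = (?D \<cdot>\<^sub>m ?e - ?cr * adj_mat A * ?bc) $$ (0, 0)"
    by (rule det_single) (use adj in auto)
  also have "\<dots> = ?D * E $$ (a, b) - row (?cr * adj_mat A) 0 \<bullet> col ?bc 0"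
    using adj by simp
  also have "row (?cr * adj_mat A) 0 = row (C * adj_mat A) a"
    by (rule eq_vecI) (use ab cars adj in \<open>auto simp: scalar_prod_def\<close>)
  also have "col ?bc 0 = col B b"
    by (rule eq_vecI) (use ab cars in auto)
  also have "?D * E $$ (a, b) - row (C * adj_mat A) a \<bullet> col B b = (?D \<cdot>\<^sub>m E - C * adj_mat A * B) $$ (a, b)"
    using ab cars adj by (simp del: assoc_mult_mat)
  finally have "?D * det (four_block_mat A ?bc ?cr ?e) = ?D * (?D \<cdot>\<^sub>m E - C * adj_mat A * B) $$ (a, b)"
    using det_four_block_mat_schur[of A v ?bc 1 ?cr ?e] cars by simp
  then show ?thesis using M \<open>det A \<noteq> 0\<close> by simp
qed

lemma sylvester_identity:
  fixes N :: "'a::idom mat"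
  assumes N: "N \<in> carrier_mat (v + s) (v + s)" and "0 < s"
    and D: "det (mat v v (\<lambda>(i, j). N $$ (i, j))) \<noteq> 0"
  shows "det (mat s s (\<lambda>(a, b). det (mat (Suc v) (Suc v)
            (\<lambda>(i, j). N $$ (if i < v then i else v + a, if j < v then j else v + b)))))
         = det (mat v v (\<lambda>(i, j). N $$ (i, j))) ^ (s - 1) * det N"
proof -
  define A where "A = mat v v (\<lambda>(i, j). N $$ (i, j))"
  define B where "B = mat v s (\<lambda>(i, j). N $$ (i, v + j))"
  define C where "C = mat s v (\<lambda>(i, j). N $$ (v + i, j))"
  define E where "E = mat s s (\<lambda>(i, j). N $$ (v + i, v + j))"
  define X where "X = det A \<cdot>\<^sub>m E - C * adj_mat A * B"
  have cars: "A \<in> carrier_mat v v" "B \<in> carrier_mat v s" "C \<in> carrier_mat s v" "E \<in> carrier_mat s s"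
    by (simp_all add: A_def B_def C_def E_def)
  have "N = four_block_mat A B C E"
    by (rule eq_matI) (use N in \<open>auto simp: A_def B_def C_def E_def\<close>)
  then have "det A ^ s * det N = det A * det X"
    unfolding X_def by (simp add: det_four_block_mat_schur[OF cars])
  then have "det A * (det A ^ (s - 1) * det N) = det A * det X"
    using \<open>0 < s\<close> by (cases s) auto
  moreover have "mat s s (\<lambda>(a, b). det (mat (Suc v) (Suc v)
      (\<lambda>(i, j). N $$ (if i < v then i else v + a, if j < v then j else v + b)))) = X"
    using D adj_mat[OF cars(1)] cars
    by (intro eq_matI) (auto simp: det_bordered_eq_schur_entry X_def A_def B_def C_def E_def)
  ultimately show ?thesis using D by (simp add: A_def)
qed
section \<open>Substitutions acting on minors\<close>

lemma nth_sorted_list_of_set_pos: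
  fixes K :: "nat set"
  assumes "finite K" "0 \<notin> K" "k < card K"
  shows "0 < sorted_list_of_set K ! k"
  using sorted_nth_in[OF assms(1,3)] assms(2) by (metis neq0_conv)

lemma nth_sorted_list_of_set_shift_down:
  assumes "finite I" "{1..v} \<subseteq> I" "0 \<notin> I" "k < card I"
  shows "sorted_list_of_set I ! k =
    (if k < v then k + 1 else sorted_list_of_set (shift_down v I) ! (k - v) + v)"
  using nth_upt_append_map_shift[of k v "sorted_list_of_set (shift_down v I)"]
    sorted_list_of_set_shift_down[OF assms(1-3)] card_shift_down[OF assms(1-3)] assms(4)
  by simp

lemma nth_sorted_list_of_shift_up:
  assumes "finite L" "0 \<notin> L" "k < v + card L"
  shows "sorted_list_of_set (shift_up v L) ! k =
    (if k < v then k + 1 else sorted_list_of_set L ! (k - v) + v)"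
  using nth_upt_append_map_shift[of k v "sorted_list_of_set L"] sorted_list_of_shift_up[OF assms(1,2)]
    assms(3)
  by simp

lemma sorted_list_of_set_atLeastAtMost_1: "sorted_list_of_set {1..v} = [1..<v+1]"
proof -
  have "{1..v} = {1..<v+1}" by auto
  then show ?thesis by simp
qed

lemma minor_diagonal_eq_det:
  "minor {1..v} {1..v} = det (mat v v (\<lambda>(k, l). var_mp (k + 1) (l + 1)))"
  unfolding minor_eq_det sorted_list_of_set_atLeastAtMost_1 minor_mat_def
  by (rule arg_cong[where f=det]) (auto intro!: eq_matI simp del: upt_Suc simp: nth_upt)

lemma minor_diagonal_nonzero: "minor {1..v} {1..v} \<noteq> (0::'a::idom mpoly)"
proof
  assume 0: "minor {1..v} {1..v} = (0::'a mpoly)"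
  let ?\<delta> = "\<lambda>(i::nat, j::nat). if i = j then 1 else (0::'a mpoly)"
  have "mat v v (\<lambda>(k, l). ?\<delta> (sorted_list_of_set {1..v} ! k, sorted_list_of_set {1..v} ! l)) = 1\<^sub>m v"
    unfolding sorted_list_of_set_atLeastAtMost_1
    by (rule eq_matI) (auto simp del: upt_Suc simp: nth_upt)
  then have "poly_eval ?\<delta> (minor {1..v} {1..v}) = 1"
    by (simp add: poly_eval_minor)
  with 0 show False by simp
qed

definition theta_subst :: "nat \<Rightarrow> nat \<times> nat \<Rightarrow> 'a::comm_ring_1 mpoly" where
  "theta_subst v = (\<lambda>(i, j). if i \<le> v \<or> j \<le> v then (if i = j then 1 else 0) else var_mp (i - v) (j - v))"

lemma nth_sorted_list_of_set_gt:
  assumes I: "finite I" "{1..v} \<subseteq> I" "0 \<notin> I" and "v \<le> k" "k < card I"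
  shows "v < sorted_list_of_set I ! k"
proof -
  have "0 < sorted_list_of_set (shift_down v I) ! (k - v)"
    using assms card_shift_down[OF I]
    by (intro nth_sorted_list_of_set_pos) (auto simp: finite_shift_down zero_notin_shift_down)
  then show ?thesis
    using assms by (simp add: nth_sorted_list_of_set_shift_down[OF I])
qed

lemma theta_subst_sorted_nth:
  assumes I: "finite I" "{1..v} \<subseteq> I" "0 \<notin> I" and J: "finite J" "{1..v} \<subseteq> J" "0 \<notin> J"
    and "k < card I" "l < card J"
  shows "theta_subst v (sorted_list_of_set I ! k, sorted_list_of_set J ! l) =
      (if k < v then (if l < v \<and> k = l then 1 else 0) else if l < v then 0
       else var_mp (sorted_list_of_set (shift_down v I) ! (k - v)) (sorted_list_of_set (shift_down v J) ! (l - v)))"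
  using nth_sorted_list_of_set_shift_down[OF I \<open>k < card I\<close>] nth_sorted_list_of_set_gt[OF I _ \<open>k < card I\<close>]
    nth_sorted_list_of_set_shift_down[OF J \<open>l < card J\<close>] nth_sorted_list_of_set_gt[OF J _ \<open>l < card J\<close>]
  by (cases "k < v"; cases "l < v") (auto simp: theta_subst_def)

lemma poly_eval_theta_subst_minor:
  assumes I: "finite I" "{1..v} \<subseteq> I" "0 \<notin> I" and J: "finite J" "{1..v} \<subseteq> J" "0 \<notin> J"
    and "card I = card J"
  shows "poly_eval (theta_subst v) (minor I J) = (minor (shift_down v I) (shift_down v J) :: 'a::idom mpoly)"
proof -
  let ?I' = "shift_down v I" and ?J' = "shift_down v J"
  let ?t = "card ?I'"
  have card: "card I = ?t + v" "card ?J' = ?t"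
    using card_shift_down[OF I] card_shift_down[OF J] \<open>card I = card J\<close> by auto
  have "mat (card I) (card I) (\<lambda>(k, l). theta_subst v (sorted_list_of_set I ! k, sorted_list_of_set J ! l))
     = four_block_mat (1\<^sub>m v) (0\<^sub>m v ?t) (0\<^sub>m ?t v)
         (minor_mat ?t (\<lambda>k. sorted_list_of_set ?I' ! k) (\<lambda>l. sorted_list_of_set ?J' ! l) :: 'a mpoly mat)"
    using \<open>card I = card J\<close> by (intro eq_matI) (auto simp: theta_subst_sorted_nth[OF I J] card minor_mat_def)
  then have "poly_eval (theta_subst v) (minor I J) = det (four_block_mat (1\<^sub>m v) (0\<^sub>m v ?t) (0\<^sub>m ?t v)
      (minor_mat ?t (\<lambda>k. sorted_list_of_set ?I' ! k) (\<lambda>l. sorted_list_of_set ?J' ! l) :: 'a mpoly mat))"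
    by (simp add: poly_eval_minor)
  also have "\<dots> = det (minor_mat ?t (\<lambda>k. sorted_list_of_set ?I' ! k) (\<lambda>l. sorted_list_of_set ?J' ! l) :: 'a mpoly mat)"
    by (subst det_four_block_mat_lower_left_zero[of _ v _ ?t]) (auto simp: minor_mat_def)
  finally show ?thesis by (simp add: minor_eq_det)
qed

definition bordered_minor :: "nat \<Rightarrow> nat \<times> nat \<Rightarrow> 'a::comm_ring_1 mpoly" where
  "bordered_minor v = (\<lambda>(a, b). minor (shift_up v {a}) (shift_up v {b}))"

lemma bordered_minor_eq_det:
  assumes "0 < x" "0 < y"
  shows "bordered_minor v (x, y) =
    det (mat (Suc v) (Suc v) (\<lambda>(i, j). var_mp (if i < v then i + 1 else x + v) (if j < v then j + 1 else y + v)))"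
proof -
  have nth: "sorted_list_of_set (shift_up v {z}) ! k = (if k < v then k + 1 else z + v)"
    if "0 < z" "k < Suc v" for z k
    using nth_sorted_list_of_shift_up[of "{z}" k v] that by simp
  have "minor_mat (Suc v) (\<lambda>k. sorted_list_of_set (shift_up v {x}) ! k)
      (\<lambda>l. sorted_list_of_set (shift_up v {y}) ! l) =
    (mat (Suc v) (Suc v) (\<lambda>(i, j). var_mp (if i < v then i + 1 else x + v) (if j < v then j + 1 else y + v)) :: 'a mpoly mat)"
    by (rule eq_matI) (auto simp: minor_mat_def nth assms)
  moreover have "card (shift_up v {x}) = Suc v"
    using card_shift_up[of "{x}" v] assms by simp
  ultimately show ?thesis
    by (simp add: bordered_minor_def minor_eq_det)
qed

lemma poly_eval_bordered_minor:
  assumes L: "finite L" "0 \<notin> L" and M: "finite M" "0 \<notin> M"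
    and card: "card L = s" "card M = s" and "0 < s"
  shows "poly_eval (bordered_minor v) (minor L M) =
    minor {1..v} {1..v} ^ (s - 1) * (minor (shift_up v L) (shift_up v M) :: 'a::idom mpoly)"
proof -
  let ?sL = "sorted_list_of_set L" and ?sM = "sorted_list_of_set M"
  let ?N = "minor_mat (v + s) (\<lambda>k. sorted_list_of_set (shift_up v L) ! k)
    (\<lambda>l. sorted_list_of_set (shift_up v M) ! l) :: 'a mpoly mat"
  have N: "?N $$ (i, j) = var_mp (if i < v then i + 1 else ?sL ! (i - v) + v)
      (if j < v then j + 1 else ?sM ! (j - v) + v)" if "i < v + s" "j < v + s" for i j
    using that card by (simp add: minor_mat_def nth_sorted_list_of_shift_up L M)
  have D: "det (mat v v (\<lambda>(i, j). ?N $$ (i, j))) = minor {1..v} {1..v}"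
    unfolding minor_diagonal_eq_det by (intro arg_cong[where f = det] eq_matI) (auto simp: N)
  have bordered: "bordered_minor v (?sL ! a, ?sM ! b) = det (mat (Suc v) (Suc v)
      (\<lambda>(i, j). ?N $$ (if i < v then i else v + a, if j < v then j else v + b)))"
    if "a < s" "b < s" for a b
  proof -
    have "0 < ?sL ! a" "0 < ?sM ! b"
      using that card nth_sorted_list_of_set_pos[OF L, of a] nth_sorted_list_of_set_pos[OF M, of b]
      by simp_all
    then show ?thesis
      by (simp only: bordered_minor_eq_det, intro arg_cong[where f = det] eq_matI)
        (auto simp: N that)
  qed
  have "poly_eval (bordered_minor v) (minor L M) =
      det (mat s s (\<lambda>(a, b). bordered_minor v (?sL ! a, ?sM ! b)))"
    by (simp add: poly_eval_minor card case_prod_beta)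
  also have "\<dots> = det (mat s s (\<lambda>(a, b). det (mat (Suc v) (Suc v)
      (\<lambda>(i, j). ?N $$ (if i < v then i else v + a, if j < v then j else v + b)))))"
    by (intro arg_cong[where f = det] eq_matI) (auto simp: bordered)
  also have "\<dots> = minor {1..v} {1..v} ^ (s - 1) * det ?N"
    using sylvester_identity[of ?N v s] D minor_diagonal_nonzero[where 'a = 'a] \<open>0 < s\<close>
    by (simp add: minor_mat_def)
  also have "det ?N = minor (shift_up v L) (shift_up v M)"
    by (simp add: minor_eq_det card_shift_up L card)
  finally show ?thesis .
qed

definition corner_subst :: "nat \<Rightarrow> nat \<Rightarrow> nat \<times> nat \<Rightarrow> 'a::comm_ring_1 mpoly" where
  "corner_subst p q = (\<lambda>(i, j). if i \<le> p \<and> j \<le> q then var_mp i j else 0)"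

lemma poly_eval_corner_subst_minor_inside:
  assumes "finite I" "finite J" "card J = card I" "I \<subseteq> {..p}" "J \<subseteq> {..q}"
  shows "poly_eval (corner_subst p q) (minor I J) = minor I J"
proof -
  have "mat (card I) (card I) (\<lambda>(k, l). corner_subst p q (sorted_list_of_set I ! k, sorted_list_of_set J ! l))
    = (minor_mat (card I) (\<lambda>k. sorted_list_of_set I ! k) (\<lambda>l. sorted_list_of_set J ! l) :: 'a mpoly mat)"
    using sorted_nth_in[OF assms(1)] sorted_nth_in[OF assms(2)] assms(3-5)
    by (intro eq_matI) (auto simp: minor_mat_def corner_subst_def subset_iff)
  then show ?thesis unfolding poly_eval_minor by (simp add: minor_eq_det)
qed

lemma poly_eval_corner_subst_minor_outside:
  assumes "finite I" "finite J" "card J = card I" "\<not> (I \<subseteq> {..p} \<and> J \<subseteq> {..q})"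
  shows "poly_eval (corner_subst p q) (minor I J) = (0 :: 'a::comm_ring_1 mpoly)"
proof -
  let ?t = "card I"
  let ?A = "mat ?t ?t (\<lambda>(k, l). corner_subst p q (sorted_list_of_set I ! k, sorted_list_of_set J ! l))
    :: 'a mpoly mat"
  have zero_entry: "\<exists>k\<in>{0..<?t}. ?A $$ (k, \<pi> k) = 0" if \<pi>: "\<pi> permutes {0..<?t}" for \<pi>
  proof -
    from assms(4) consider (row) i where "i \<in> I" "\<not> i \<le> p" | (col) j where "j \<in> J" "\<not> j \<le> q"
      by auto
    then show ?thesis
    proof cases
      case row
      then obtain k where k: "k < ?t" "sorted_list_of_set I ! k = i"
        using assms(1) by (metis in_set_conv_nth length_sorted_list_of_set set_sorted_list_of_set)
      have "\<pi> k < ?t" using \<pi> k(1) permutes_in_image by fastforce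
      then show ?thesis using k row by (intro bexI[of _ k]) (auto simp: corner_subst_def)
    next
      case col
      then obtain l where l: "l < ?t" "sorted_list_of_set J ! l = j"
        using assms(2,3) by (metis in_set_conv_nth length_sorted_list_of_set set_sorted_list_of_set)
      define k where "k = inv_into UNIV \<pi> l"
      have "\<pi> k = l" "k \<in> {0..<?t}"
        unfolding k_def using permutes_inverses(1)[OF \<pi>] permutes_in_image[OF permutes_inv[OF \<pi>]] l(1)
        by auto
      then show ?thesis using l col by (intro bexI[of _ k]) (auto simp: corner_subst_def)
    qed
  qed
  have "(\<Prod>i = 0..<?t. ?A $$ (i, \<pi> i)) = 0" if "\<pi> permutes {0..<?t}" for \<pi>
    by (rule prod_zero) (simp_all add: zero_entry[OF that])
  then have "det ?A = 0"
    unfolding det_def by (auto intro!: sum.neutral)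
  then show ?thesis by (simp add: poly_eval_minor)
qed
section \<open>The retractions\<close>

definition theta_values :: "nat \<Rightarrow> nat set \<times> nat set \<Rightarrow> 'a::comm_ring_1 mpoly" where
  "theta_values v = (\<lambda>(I, J).
     if {1..v} \<subseteq> I \<and> {1..v} \<subseteq> J then minor (shift_down v I) (shift_down v J) else 0)"

definition psi_values :: "nat \<Rightarrow> nat set \<times> nat set \<Rightarrow> 'a::comm_ring_1 mpoly" where
  "psi_values v = (\<lambda>(L, M). minor (shift_up v L) (shift_up v M))"

lemma theta_respects_relations:
  assumes "v \<le> t"
  shows "respects_relations minor_of (theta_values v :: _ \<Rightarrow> 'a::idom mpoly) (minor_indices t p q)"
proof (rule respects_relations_partial_subst)
  let ?good = "\<lambda>z. {1..v} \<subseteq> fst z \<and> {1..v} \<subseteq> snd z"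
  show "theta_values v z = poly_eval (theta_subst v) (minor_of z :: 'a mpoly)"
    if "z \<in> minor_indices t p q" "?good z" for z
    using that minor_indicesD[of "fst z" "snd z"]
    by (auto simp: theta_values_def minor_of_def poly_eval_theta_subst_minor split: prod.splits)
  show "theta_values v z = 0" if "z \<in> minor_indices t p q" "\<not> ?good z" for z
    using that by (auto simp: theta_values_def split: prod.splits)
  fix \<zeta> and \<mu> assume keys: "Poly_Mapping.keys \<zeta> \<subseteq> minor_indices t p q"
    and \<mu>: "\<mu> \<in> Poly_Mapping.keys (monom_eval (minor_of :: _ \<Rightarrow> 'a mpoly) \<zeta>)"
  have "0 < t" if "i \<in> {1..v}" for i
    using that assms by auto
  then show "((\<forall>i\<in>{1..v}. t * weighted_deg (row_weight i) \<mu> = total_deg \<mu>) \<and>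
      (\<forall>j\<in>{1..v}. t * weighted_deg (col_weight j) \<mu> = total_deg \<mu>)) \<longleftrightarrow>
      (\<forall>z\<in>Poly_Mapping.keys \<zeta>. ?good z)"
    using monomial_of_minors_row_col_criterion[OF keys \<mu>] by blast
qed

lemma psi_respects_relations:
  assumes "0 < s"
  shows "respects_relations minor_of (psi_values v :: _ \<Rightarrow> 'a::idom mpoly) (minor_indices s p q)"
proof (rule respects_relations_scaled_subst)
  show "weighted_homogeneous (\<lambda>_. 1) s (minor_of z :: 'a mpoly)" if "z \<in> minor_indices s p q" for z
    using that weighted_homogeneous_minor_total minor_indicesD(5)
    by (fastforce simp: minor_of_def split: prod.splits)
  show "poly_eval (bordered_minor v) (minor_of z :: 'a mpoly) = minor {1..v} {1..v} ^ (s - 1) * psi_values v z"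
    if "z \<in> minor_indices s p q" for z
  proof -
    obtain L M where z: "z = (L, M)" by (cases z)
    show ?thesis
      using minor_indicesD[of L M s p q] that \<open>0 < s\<close>
      by (simp add: z minor_of_def psi_values_def poly_eval_bordered_minor)
  qed
qed (use assms minor_diagonal_nonzero[where 'a = 'a] in simp_all)

lemma theta_values_in_A_alg:
  assumes "(I, J) \<in> minor_indices t m n"
  shows "theta_values v (I, J) \<in> A_alg (t - v) (m - v) (n - v)"
proof (cases "{1..v} \<subseteq> I \<and> {1..v} \<subseteq> J")
  case True
  moreover have "shift_down v I \<subseteq> {1..m - v}"
    by (rule shift_down_subset[OF minor_indicesD(7)[OF assms]])
  moreover have "shift_down v J \<subseteq> {1..n - v}"
    by (rule shift_down_subset[OF minor_indicesD(8)[OF assms]])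
  ultimately have "(shift_down v I, shift_down v J) \<in> minor_indices (t - v) (m - v) (n - v)"
    using minor_indicesD[OF assms] card_shift_down[of I v] card_shift_down[of J v]
    by (auto simp: minor_indices_def)
  then show ?thesis using True by (simp add: theta_values_def minor_in_A_alg)
next
  case False
  then show ?thesis by (auto simp: theta_values_def A_alg_def)
qed

lemma shift_up_in_minor_indices:
  assumes "(L, M) \<in> minor_indices (t - v) (m - v) (n - v)" "0 < t - v"
  shows "(shift_up v L, shift_up v M) \<in> minor_indices t m n"
proof -
  have "L \<noteq> {}" "M \<noteq> {}" "finite L" "finite M" "0 \<notin> L" "0 \<notin> M" "card L = t - v" "card M = t - v"
    using minor_indicesD[OF assms(1)] assms(2) by auto
  moreover have "shift_up v L \<subseteq> {1..m}"
    by (rule shift_up_subset[OF minor_indicesD(7)[OF assms(1)] \<open>L \<noteq> {}\<close>])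
  moreover have "shift_up v M \<subseteq> {1..n}"
    by (rule shift_up_subset[OF minor_indicesD(8)[OF assms(1)] \<open>M \<noteq> {}\<close>])
  ultimately show ?thesis
    using assms(2) by (simp add: minor_indices_def card_shift_up)
qed

lemma theta_hom_exists:
  assumes "v \<le> t"
  obtains \<theta> :: "'a::idom mpoly \<Rightarrow> 'a mpoly"
  where "alg_hom \<theta> (A_alg t m n) (A_alg (t - v) (m - v) (n - v))"
    and "\<And>I J. (I, J) \<in> minor_indices t m n \<Longrightarrow> \<theta> (minor I J) = theta_values v (I, J)"
proof
  let ?\<theta> = "induced_hom minor_of (theta_values v) (minor_indices t m n) :: 'a mpoly \<Rightarrow> _"
  have wd: "respects_relations minor_of (theta_values v :: _ \<Rightarrow> 'a mpoly) (minor_indices t m n)"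
    by (rule theta_respects_relations[OF assms])
  have "subalg (theta_values v ` minor_indices t m n) \<subseteq> A_alg (t - v) (m - v) (n - v)"
    unfolding A_alg_def
    by (rule subalg_mono) (use theta_values_in_A_alg in \<open>fastforce simp: A_alg_def\<close>)
  then show "alg_hom ?\<theta> (A_alg t m n) (A_alg (t - v) (m - v) (n - v))"
    unfolding A_alg_eq_subalg_minor_of[of t m n] by (rule alg_hom_enlarge[OF alg_hom_induced_hom[OF wd]])
  show "?\<theta> (minor I J) = theta_values v (I, J)" if "(I, J) \<in> minor_indices t m n" for I J
    using induced_hom_generator[OF wd that] by (simp add: minor_of_def)
qed

lemma psi_hom_exists:
  assumes "v \<le> t"
  obtains \<psi> :: "'a::idom mpoly \<Rightarrow> 'a mpoly"
  where "alg_hom \<psi> (A_alg (t - v) (m - v) (n - v)) (A_alg t m n)"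
    and "\<And>L M. 0 < t - v \<Longrightarrow> (L, M) \<in> minor_indices (t - v) (m - v) (n - v) \<Longrightarrow>
      \<psi> (minor L M) = psi_values v (L, M)"
proof (cases "t - v = 0")
  case True
  have "A_alg (t - v) (m - v) (n - v) \<subseteq> (A_alg t m n :: 'a mpoly set)"
    using True A_alg_0_subset subalg_mono[of "{1}" "minors t m n"] by (auto simp: A_alg_def)
  with True show ?thesis by (intro that[of id] alg_hom_id) simp_all
next
  case False
  let ?Z = "minor_indices (t - v) (m - v) (n - v)"
  let ?\<psi> = "induced_hom minor_of (psi_values v) ?Z :: 'a mpoly \<Rightarrow> _"
  have wd: "respects_relations minor_of (psi_values v :: _ \<Rightarrow> 'a mpoly) ?Z"
    using False by (intro psi_respects_relations) simp
  have "subalg (psi_values v ` ?Z) \<subseteq> A_alg t m n"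
    unfolding A_alg_def
    by (rule subalg_mono)
      (use False shift_up_in_minor_indices minor_in_A_alg in \<open>fastforce simp: psi_values_def A_alg_def\<close>)
  then have "alg_hom ?\<psi> (A_alg (t - v) (m - v) (n - v)) (A_alg t m n)"
    unfolding A_alg_eq_subalg_minor_of[of "t - v"] by (rule alg_hom_enlarge[OF alg_hom_induced_hom[OF wd]])
  moreover have "?\<psi> (minor L M) = psi_values v (L, M)" if "(L, M) \<in> ?Z" for L M
    using induced_hom_generator[OF wd that] by (simp add: minor_of_def)
  ultimately show ?thesis by (rule that)
qed
lemma theta_psi_generator:
  assumes \<theta>: "alg_hom \<theta> (A_alg t m n) B"
    and \<theta>_minor: "\<And>I J. (I, J) \<in> minor_indices t m n \<Longrightarrow> \<theta> (minor I J) = theta_values v (I, J)"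
    and \<psi>_minor: "\<And>L M. 0 < t - v \<Longrightarrow> (L, M) \<in> minor_indices (t - v) (m - v) (n - v) \<Longrightarrow>
      \<psi> (minor L M) = psi_values v (L, M)"
    and \<psi>_1: "\<psi> 1 = 1"
    and LM: "(L, M) \<in> minor_indices (t - v) (m - v) (n - v)"
  shows "\<theta> (\<psi> (minor L M)) = minor L M"
proof (cases "t - v = 0")
  case True
  then have "L = {}" "M = {}" using minor_indicesD[OF LM] by auto
  then show ?thesis using \<psi>_1 alg_hom_one[OF \<theta>] by (simp add: minor_empty)
next
  case False
  have "0 \<notin> L" "0 \<notin> M" using minor_indicesD[OF LM] by auto
  moreover have "{1..v} \<subseteq> shift_up v L" "{1..v} \<subseteq> shift_up v M" by (auto simp: shift_up_def)
  ultimately show ?thesis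
    using False \<psi>_minor[OF _ LM] \<theta>_minor[OF shift_up_in_minor_indices[OF LM]]
    by (simp add: psi_values_def theta_values_def shift_down_shift_up)
qed

lemma minor_algebra_retract:
  fixes m n t v :: nat
  assumes "v \<le> t"
  shows "\<exists>\<theta> \<psi> :: 'a::idom mpoly \<Rightarrow> 'a mpoly.
            alg_hom \<theta> (A_alg t m n) (A_alg (t - v) (m - v) (n - v))
          \<and> alg_hom \<psi> (A_alg (t - v) (m - v) (n - v)) (A_alg t m n)
          \<and> (\<forall>I J. I \<subseteq> {1..m} \<and> J \<subseteq> {1..n} \<and> card I = t \<and> card J = t \<longrightarrow>
                \<theta> (minor I J) = (if {1..v} \<subseteq> I \<and> {1..v} \<subseteq> J
                                  then minor (shift_down v I) (shift_down v J) else 0))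
          \<and> (0 < t - v \<longrightarrow> (\<forall>L M. L \<subseteq> {1..m - v} \<and> M \<subseteq> {1..n - v} \<and> card L = t - v \<and> card M = t - v \<longrightarrow>
                \<psi> (minor L M) = minor (shift_up v L) (shift_up v M)))
          \<and> (\<forall>a \<in> A_alg (t - v) (m - v) (n - v). \<theta> (\<psi> a) = a)"
proof -
  obtain \<theta> :: "'a mpoly \<Rightarrow> 'a mpoly" where \<theta>: "alg_hom \<theta> (A_alg t m n) (A_alg (t - v) (m - v) (n - v))"
    and \<theta>_minor: "\<And>I J. (I, J) \<in> minor_indices t m n \<Longrightarrow> \<theta> (minor I J) = theta_values v (I, J)"
    using theta_hom_exists[OF assms] by blast
  obtain \<psi> :: "'a mpoly \<Rightarrow> 'a mpoly" where \<psi>: "alg_hom \<psi> (A_alg (t - v) (m - v) (n - v)) (A_alg t m n)"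
    and \<psi>_minor: "\<And>L M. 0 < t - v \<Longrightarrow> (L, M) \<in> minor_indices (t - v) (m - v) (n - v) \<Longrightarrow>
      \<psi> (minor L M) = psi_values v (L, M)"
    using psi_hom_exists[OF assms] by blast
  let ?Z = "minor_indices (t - v) (m - v) (n - v)"
  have generator: "\<theta> (\<psi> g) = g" if "g \<in> minor_of ` ?Z" for g
    using that theta_psi_generator[OF \<theta> \<theta>_minor \<psi>_minor alg_hom_one[OF \<psi>]]
    by (auto simp: minor_of_def)
  have retract: "\<theta> (\<psi> a) = a" if "a \<in> A_alg (t - v) (m - v) (n - v)" for a
  proof (rule alg_hom_left_inverse_on_generators[OF _ \<theta> _ generator])
    show "alg_hom \<psi> (subalg (minor_of ` ?Z)) (A_alg t m n)"
      using \<psi> unfolding A_alg_eq_subalg_minor_of[of "t - v" "m - v" "n - v"] .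
    show "a \<in> subalg (minor_of ` ?Z)"
      using that unfolding A_alg_eq_subalg_minor_of .
  qed (simp add: A_alg_def)
  have "\<forall>I J. I \<subseteq> {1..m} \<and> J \<subseteq> {1..n} \<and> card I = t \<and> card J = t \<longrightarrow>
      \<theta> (minor I J) = (if {1..v} \<subseteq> I \<and> {1..v} \<subseteq> J then minor (shift_down v I) (shift_down v J) else 0)"
    using \<theta>_minor by (simp add: minor_indices_def theta_values_def)
  moreover have "0 < t - v \<longrightarrow> (\<forall>L M. L \<subseteq> {1..m - v} \<and> M \<subseteq> {1..n - v} \<and> card L = t - v \<and>
      card M = t - v \<longrightarrow> \<psi> (minor L M) = minor (shift_up v L) (shift_up v M))"
    using \<psi>_minor by (simp add: minor_indices_def psi_values_def)
  ultimately show ?thesis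
    using \<theta> \<psi> retract by (intro exI[of _ \<theta>] exI[of _ \<psi>] conjI ballI)
qed

lemma corner_projection_hom:
  assumes "m' \<le> p" "n' \<le> q"
  shows "alg_hom (poly_eval (corner_subst m' n')) (A_alg t p q) (A_alg t m' n' :: 'a::comm_ring_1 mpoly set)"
  unfolding A_alg_def
proof (rule alg_hom_poly_eval)
  fix x :: "'a mpoly" assume "x \<in> minors t p q"
  then obtain I J where IJ: "x = minor I J" "I \<subseteq> {1..p}" "J \<subseteq> {1..q}" "card I = t" "card J = t"
    unfolding minors_def by blast
  then have fin: "finite I" "finite J" by (auto intro: finite_subset)
  show "poly_eval (corner_subst m' n') x \<in> subalg (minors t m' n')"
  proof (cases "I \<subseteq> {..m'} \<and> J \<subseteq> {..n'}")
    case True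
    then have "I \<subseteq> {1..m'}" "J \<subseteq> {1..n'}" using IJ(2,3) by (auto simp: subset_iff)
    then show ?thesis
      using True IJ fin by (auto simp: poly_eval_corner_subst_minor_inside minors_def intro!: subalg.gen)
  next
    case False
    then show ?thesis using IJ fin by (simp add: poly_eval_corner_subst_minor_outside)
  qed
qed

lemma corner_projection_fixes:
  assumes "a \<in> (A_alg t m' n' :: 'a::comm_ring_1 mpoly set)"
  shows "poly_eval (corner_subst m' n') a = a"
  using assms unfolding A_alg_def
proof (rule poly_eval_fixes_subalg[rotated])
  fix x :: "'a mpoly" assume "x \<in> minors t m' n'"
  then obtain I J where IJ: "x = minor I J" "I \<subseteq> {1..m'}" "J \<subseteq> {1..n'}" "card I = t" "card J = t"
    unfolding minors_def by blast
  then have "finite I" "finite J" by (auto intro: finite_subset)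
  with IJ show "poly_eval (corner_subst m' n') x = x"
    by (simp add: poly_eval_corner_subst_minor_inside subset_iff)
qed

lemma smaller_minor_algebra_retract:
  assumes "t' \<le> t" and "m' \<le> m" and "n' \<le> n" and "t - t' \<le> m - m'" and "t - t' \<le> n - n'"
  shows "\<exists>\<iota> \<rho> :: 'a::idom mpoly \<Rightarrow> 'a mpoly.
    alg_hom \<iota> (A_alg t' m' n') (A_alg t m n) \<and> alg_hom \<rho> (A_alg t m n) (A_alg t' m' n')
    \<and> (\<forall>a \<in> A_alg t' m' n'. \<rho> (\<iota> a) = a)"
proof -
  define w where "w = t - t'"
  have "w \<le> t" "t - w = t'" "m' \<le> m - w" "n' \<le> n - w" using assms by (auto simp: w_def)
  then obtain \<theta> \<psi> :: "'a mpoly \<Rightarrow> 'a mpoly"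
    where \<theta>: "alg_hom \<theta> (A_alg t m n) (A_alg t' (m - w) (n - w))"
      and \<psi>: "alg_hom \<psi> (A_alg t' (m - w) (n - w)) (A_alg t m n)"
      and retract: "\<forall>a \<in> A_alg t' (m - w) (n - w). \<theta> (\<psi> a) = a"
    using minor_algebra_retract[of w t m n] by auto
  have sub: "A_alg t' m' n' \<subseteq> (A_alg t' (m - w) (n - w) :: 'a mpoly set)"
    using \<open>m' \<le> m - w\<close> \<open>n' \<le> n - w\<close> by (rule A_alg_mono)
  show ?thesis
  proof (intro exI conjI ballI)
    show "alg_hom \<psi> (A_alg t' m' n') (A_alg t m n)"
      using \<psi> sub by (rule alg_hom_restrict)
    show "alg_hom (poly_eval (corner_subst m' n') \<circ> \<theta>) (A_alg t m n) (A_alg t' m' n')"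
      using \<theta> corner_projection_hom[OF \<open>m' \<le> m - w\<close> \<open>n' \<le> n - w\<close>] by (rule alg_hom_comp)
    show "(poly_eval (corner_subst m' n') \<circ> \<theta>) (\<psi> a) = a" if "a \<in> A_alg t' m' n'" for a
      using that sub retract corner_projection_fixes[OF that] by auto
  qed
qed

theorem proposition5p2:
  fixes m n t v :: nat
  assumes "alg_closed TYPE('a::field_char_0)"
    and "m \<le> n" and "v \<le> t"
  shows "(\<exists>\<theta> \<psi> :: 'a mpoly \<Rightarrow> 'a mpoly.
            alg_hom \<theta> (A_alg t m n) (A_alg (t - v) (m - v) (n - v))
          \<and> alg_hom \<psi> (A_alg (t - v) (m - v) (n - v)) (A_alg t m n)
          \<and> (\<forall>I J. I \<subseteq> {1..m} \<and> J \<subseteq> {1..n} \<and> card I = t \<and> card J = t \<longrightarrow>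
                \<theta> (minor I J) = (if {1..v} \<subseteq> I \<and> {1..v} \<subseteq> J
                                  then minor (shift_down v I) (shift_down v J) else 0))
          \<and> (0 < t - v \<longrightarrow> (\<forall>L M. L \<subseteq> {1..m - v} \<and> M \<subseteq> {1..n - v} \<and> card L = t - v \<and> card M = t - v \<longrightarrow>
                \<psi> (minor L M) = minor (shift_up v L) (shift_up v M)))
          \<and> (\<forall>a \<in> A_alg (t - v) (m - v) (n - v). \<theta> (\<psi> a) = a))
       \<and> (\<forall>t' m' n' :: nat. t' \<le> t \<and> m' \<le> m \<and> n' \<le> n \<and> t - t' \<le> m - m' \<and> t - t' \<le> n - n' \<longrightarrow>
            (\<exists>\<iota> \<rho> :: 'a mpoly \<Rightarrow> 'a mpoly.
               alg_hom \<iota> (A_alg t' m' n') (A_alg t m n)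
             \<and> alg_hom \<rho> (A_alg t m n) (A_alg t' m' n')
             \<and> (\<forall>a \<in> A_alg t' m' n'. \<rho> (\<iota> a) = a)))"
  by (intro conjI allI impI minor_algebra_retract[OF \<open>v \<le> t\<close>] smaller_minor_algebra_retract) simp_all

end
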